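(* Let $f:\mathbb{R}\to\mathbb{R}$ be such that $f(s)$ and $f'(s)s$ have $\alpha_0$-critical growth at $\pm\infty$ for some $\alpha_0\in(0,\omega)$, and assume: (f1) $f$ is $C^1$, odd, convex on $\mathbb{R}^+$, and $\lim_{s\to0}f(s)/s=0$; (f2) $s\mapsto s^{-1}f(s)$ is increasing for $s>0$; (f3) there are $q>2$, $C_q>0$ with $F(s)\ge C_q|s|^q$ for all $s$, where $F(s)=\int_0^sf(\sigma)d\sigma$; (AR) there is $\theta>2$ with $\theta F(s)\le sf(s)$ for all $s$. Then there is $\rho_0>0$ such that for every sequence $(u_n)\subset H^{1/2}(\mathbb{R})$ with $u_n\rightharpoonup u$ weakly in $H^{1/2}(\mathbb{R})$ and $\|u_n\|<\rho_0$ for all $n$, as $n\to\infty$, $$\int_{\mathbb{R}}f(u_n)u_n\,dx=\int_{\mathbb{R}}f(u_n-u)(u_n-u)\,dx+\int_{\mathbb{R}}f(u)u\,dx+o(1),$$ $$\int_{\mathbb{R}}F(u_n)\,dx=\int_{\mathbb{R}}F(u_n-u)\,dx+\int_{\mathbb{R}}F(u)\,dx+o(1).$$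
   Context: $H^{1/2}(\mathbb{R})=\{u\in L^2(\mathbb{R}):\int_{\mathbb{R}^2}\frac{(u(x)-u(y))^2}{|x-y|^2}dx\,dy<\infty\}$ with norm $\|u\|^2=\|u\|_{L^2}^2+\int_{\mathbb{R}^2}\frac{(u(x)-u(y))^2}{|x-y|^2}dx\,dy$. The constant $\omega\in(0,\pi]$ is one for which Ozawa's inequality holds: for every $\alpha\in(0,\omega)$ there is $H_\alpha>0$ with $\int_{\mathbb{R}}(e^{\alpha u^2}-1)dx\le H_\alpha\|u\|_{L^2}^2$ whenever $\frac{1}{2\pi}\int_{\mathbb{R}^2}\frac{(u(x)-u(y))^2}{|x-y|^2}dxdy\le1$. A function $g$ has $\alpha_0$-critical growth at $\pm\infty$ if $\limsup_{s\to\pm\infty}\frac{g(s)}{e^{\alpha s^2}-1}=0$ for all $\alpha>\alpha_0$ and $=\pm\infty$ for all $\alpha<\alpha_0$. *)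

theory Defs
  imports "HOL-Analysis.Analysis"
begin

text \<open>Gagliardo seminorm (squared): the double integral over R^2, as an extended
  nonnegative real (the diagonal x = y is a null set).\<close>
definition gagliardo :: "(real \<Rightarrow> real) \<Rightarrow> ennreal" where
  "gagliardo u = (\<integral>\<^sup>+ z. ennreal ((u (fst z) - u (snd z))^2 / (fst z - snd z)^2) \<partial>(lborel \<Otimes>\<^sub>M lborel))"

definition H12 :: "(real \<Rightarrow> real) set" where
  "H12 = {u. u \<in> borel_measurable lborel \<and> integrable lborel (\<lambda>x. (u x)^2) \<and> gagliardo u < \<infinity>}"

definition H12_norm :: "(real \<Rightarrow> real) \<Rightarrow> real" where
  "H12_norm u = sqrt ((\<integral>x. (u x)^2 \<partial>lborel) + enn2real (gagliardo u))"

definition H12_dual :: "((real \<Rightarrow> real) \<Rightarrow> real) set" where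
  "H12_dual = {L. (\<forall>v\<in>H12. \<forall>w\<in>H12. \<forall>a b::real. L (\<lambda>x. a * v x + b * w x) = a * L v + b * L w)
                 \<and> (\<exists>C. \<forall>v\<in>H12. \<bar>L v\<bar> \<le> C * H12_norm v)}"

definition H12_weak_conv :: "(nat \<Rightarrow> real \<Rightarrow> real) \<Rightarrow> (real \<Rightarrow> real) \<Rightarrow> bool" where
  "H12_weak_conv un u \<longleftrightarrow> (\<forall>n. un n \<in> H12) \<and> u \<in> H12 \<and>
     (\<forall>L\<in>H12_dual. (\<lambda>n. L (un n)) \<longlonglongrightarrow> L u)"

definition ozawa_const :: "real \<Rightarrow> bool" where
  "ozawa_const \<omega> \<longleftrightarrow> 0 < \<omega> \<and> \<omega> \<le> pi \<and>
     (\<forall>\<alpha>. 0 < \<alpha> \<and> \<alpha> < \<omega> \<longrightarrow> (\<exists>H>0. \<forall>u\<in>H12.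
        enn2real (gagliardo u) / (2 * pi) \<le> 1 \<longrightarrow>
        (\<integral>\<^sup>+ x. ennreal (exp (\<alpha> * (u x)^2) - 1) \<partial>lborel) \<le> ennreal (H * (\<integral>x. (u x)^2 \<partial>lborel))))"

definition critical_growth :: "real \<Rightarrow> (real \<Rightarrow> real) \<Rightarrow> bool" where
  "critical_growth \<alpha>0 g \<longleftrightarrow>
     (\<forall>\<alpha>>\<alpha>0. Limsup at_top (\<lambda>s. ereal (g s / (exp (\<alpha> * s^2) - 1))) = 0 \<and>
               Limsup at_bot (\<lambda>s. ereal (g s / (exp (\<alpha> * s^2) - 1))) = 0) \<and>
     (\<forall>\<alpha>. 0 < \<alpha> \<and> \<alpha> < \<alpha>0 \<longrightarrow>
               Limsup at_top (\<lambda>s. ereal (g s / (exp (\<alpha> * s^2) - 1))) = \<infinity> \<and>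
               Limsup at_bot (\<lambda>s. ereal (g s / (exp (\<alpha> * s^2) - 1))) = -\<infinity>)"

definition prim :: "(real \<Rightarrow> real) \<Rightarrow> real \<Rightarrow> real" where
  "prim f s = (if 0 \<le> s then integral {0..s} f else - integral {s..0} f)"

end

theory Submission
  imports Defs "HOL-Probability.Distributions"
begin

text \<open>
  Write \<open>\<Phi>\<^sub>k(s) = e\<^sup>k\<^sup>s\<^sup>2 - 1\<close>. For \<open>\<beta> > \<alpha>\<^sub>0\<close> the critical growth bounds \<open>f(s)\<close> and \<open>f'(s)s\<close> by
  \<open>\<Phi>\<^sub>\<beta>(s)\<close> at infinity, and (f1) makes them \<open>o(s)\<close> at zero; hence both derivatives of the
  functions \<open>j(s) = f(s)s\<close> and \<open>j = F\<close> are bounded by \<open>K \<Phi>\<^sub>2\<^sub>\<beta>(s)\<^sup>1\<^sup>/\<^sup>2\<close>. The mean value theorem and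
  Young's inequality turn this into \<open>|j(a+b) - j(a)| \<le> \<epsilon> \<Phi>\<^sub>\<kappa>(a) + C\<^sub>\<epsilon> \<Phi>\<^sub>\<kappa>(b)\<close> with
  \<open>\<kappa> = 8\<beta>\<close>, for every \<open>\<epsilon> > 0\<close>. Scaling Ozawa's inequality shows that \<open>\<integral> \<Phi>\<^sub>4\<^sub>\<kappa>(u\<^sub>n)\<close> is
  bounded once \<open>\<parallel>u\<^sub>n\<parallel>\<close> is small, and then the Brezis--Lieb argument (dominated convergence
  for \<open>(|j(u\<^sub>n) - j(u\<^sub>n - u) - j(u)| - \<epsilon> \<Phi>\<^sub>\<kappa>(u\<^sub>n - u))\<^sup>+\<close>) gives the splitting along every
  almost everywhere convergent subsequence.

  Weak convergence gives such subsequences: the means of \<open>u\<^sub>n\<close> over the cells of a fine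
  partition of \<open>[-R, R)\<close> converge, and a Poincar\'e inequality on each cell bounds the
  oscillation by the cell width times the Gagliardo seminorm, so \<open>u\<^sub>n \<rightarrow> u\<close> in
  \<open>L\<^sup>2(-R, R)\<close>.
\<close>

section \<open>The Trudinger--Moser function\<close>

definition expsq :: "real \<Rightarrow> real \<Rightarrow> real" where
  "expsq k s = exp (k * s\<^sup>2) - 1"

lemma expsq_nonneg: "0 \<le> k \<Longrightarrow> 0 \<le> expsq k s"
  unfolding expsq_def by simp

lemma mult_power2_le_expsq: "k * s\<^sup>2 \<le> expsq k s"
  unfolding expsq_def using exp_ge_add_one_self[of "k * s\<^sup>2"] by linarith

lemma expsq_mono: "0 \<le> k \<Longrightarrow> s\<^sup>2 \<le> t\<^sup>2 \<Longrightarrow> expsq k s \<le> expsq k t"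
  unfolding expsq_def by (simp add: mult_left_mono)

lemma expsq_mono_coeff: "k \<le> k' \<Longrightarrow> expsq k s \<le> expsq k' s"
  unfolding expsq_def by (simp add: mult_right_mono)

lemma expsq_minus [simp]: "expsq k (- s) = expsq k s"
  unfolding expsq_def by simp

lemma expsq_zero [simp]: "expsq k 0 = 0"
  unfolding expsq_def by simp

lemma power2_expsq_le: "0 \<le> k \<Longrightarrow> (expsq k s)\<^sup>2 \<le> expsq (2 * k) s"
proof -
  assume k: "0 \<le> k"
  have "1 \<le> exp (k * s\<^sup>2)" using k by simp
  moreover have "exp (2 * k * s\<^sup>2) = exp (k * s\<^sup>2) * exp (k * s\<^sup>2)"
    by (simp add: exp_add[symmetric])
  ultimately show ?thesis unfolding expsq_def by (simp add: power2_eq_square algebra_simps)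
qed

lemma expsq_abs_add_le: "0 \<le> k \<Longrightarrow> expsq k (\<bar>a\<bar> + \<bar>b\<bar>) \<le> expsq (4 * k) a + expsq (4 * k) b"
proof -
  assume k: "0 \<le> k"
  have "(\<bar>a\<bar> + \<bar>b\<bar>)\<^sup>2 \<le> 4 * max (a\<^sup>2) (b\<^sup>2)"
  proof (cases "\<bar>a\<bar> \<le> \<bar>b\<bar>")
    case True
    then have "(\<bar>a\<bar> + \<bar>b\<bar>)\<^sup>2 \<le> (2 * \<bar>b\<bar>)\<^sup>2" by (intro power_mono) auto
    then show ?thesis by (simp add: power_mult_distrib)
  next
    case False
    then have "(\<bar>a\<bar> + \<bar>b\<bar>)\<^sup>2 \<le> (2 * \<bar>a\<bar>)\<^sup>2" by (intro power_mono) auto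
    then show ?thesis by (simp add: power_mult_distrib)
  qed
  then have "expsq k (\<bar>a\<bar> + \<bar>b\<bar>) \<le> exp (k * (4 * max (a\<^sup>2) (b\<^sup>2))) - 1"
    unfolding expsq_def using k by (simp add: mult_left_mono)
  also have "\<dots> \<le> expsq (4 * k) a + expsq (4 * k) b"
    using expsq_nonneg[of "4 * k" a] expsq_nonneg[of "4 * k" b] k
    by (cases "a\<^sup>2 \<le> b\<^sup>2") (auto simp: expsq_def max_def mult.assoc mult.left_commute)
  finally show ?thesis .
qed

lemma expsq_diff_le: "0 \<le> k \<Longrightarrow> expsq k (a - b) \<le> expsq (4 * k) a + expsq (4 * k) b"
proof -
  assume k: "0 \<le> k"
  have "(a - b)\<^sup>2 \<le> (\<bar>a\<bar> + \<bar>b\<bar>)\<^sup>2"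
    by (metis abs_ge_zero abs_triangle_ineq4 power2_abs power_mono)
  then have "expsq k (a - b) \<le> expsq k (\<bar>a\<bar> + \<bar>b\<bar>)" using expsq_mono k by blast
  also have "\<dots> \<le> expsq (4 * k) a + expsq (4 * k) b" using expsq_abs_add_le k by blast
  finally show ?thesis .
qed

lemma borel_measurable_expsq [measurable]: "expsq k \<in> borel_measurable borel"
  unfolding expsq_def by measurable

section \<open>Growth bounds\<close>

lemma critical_growth_eventually_less:
  assumes "critical_growth \<alpha>0 g" and "\<alpha>0 < \<beta>" and "0 < \<beta>"
  shows "\<exists>N. \<forall>s\<ge>N. g s < expsq \<beta> s"
proof -
  have "Limsup at_top (\<lambda>s. ereal (g s / (exp (\<beta> * s\<^sup>2) - 1))) = 0"
    using assms unfolding critical_growth_def by auto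
  then have "eventually (\<lambda>s. ereal (g s / (exp (\<beta> * s\<^sup>2) - 1)) < 1) at_top"
    by (intro Limsup_lessD) simp
  then obtain N where N: "\<And>s. s \<ge> N \<Longrightarrow> g s / (exp (\<beta> * s\<^sup>2) - 1) < 1"
    unfolding eventually_at_top_linorder by auto
  have "g s < expsq \<beta> s" if "s \<ge> max N 1" for s
  proof -
    have "exp (\<beta> * s\<^sup>2) - 1 > 0" using that \<open>0 < \<beta>\<close> by simp
    then show ?thesis using N[of s] that unfolding expsq_def by (simp add: divide_less_eq)
  qed
  then show ?thesis by blast
qed

text \<open>Critical growth only bounds \<open>g\<close> from above; the symmetry hypotheses turn this into a
  bound for \<open>|g|\<close> at both ends.\<close>

lemma critical_growth_abs_le_expsq:
  assumes "critical_growth \<alpha>0 g" and "\<alpha>0 < \<beta>" and "0 < \<beta>"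
    and nonneg: "\<And>s. 0 \<le> s \<Longrightarrow> 0 \<le> g s" and even: "\<And>s. \<bar>g (- s)\<bar> = \<bar>g s\<bar>"
  shows "\<exists>S. \<forall>s. S \<le> \<bar>s\<bar> \<longrightarrow> \<bar>g s\<bar> \<le> expsq \<beta> s"
proof -
  obtain N where N: "\<And>s. s \<ge> N \<Longrightarrow> g s < expsq \<beta> s"
    using critical_growth_eventually_less[OF assms(1-3)] by auto
  have "\<bar>g s\<bar> \<le> expsq \<beta> s" if "max N 0 \<le> \<bar>s\<bar>" for s
  proof (cases "s \<ge> 0")
    case True
    then show ?thesis using N[of s] nonneg[of s] that by auto
  next
    case False
    then have "g (- s) < expsq \<beta> (- s)" "0 \<le> g (- s)" using N[of "- s"] nonneg[of "- s"] that by auto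
    then show ?thesis using even[of s] by simp
  qed
  then show ?thesis by blast
qed

lemma abs_le_abs_near_zero:
  fixes g :: "real \<Rightarrow> real"
  assumes "((\<lambda>s. g s / s) \<longlongrightarrow> 0) (at 0)" and "g 0 = 0"
  shows "\<exists>\<delta>>0. \<forall>s. \<bar>s\<bar> < \<delta> \<longrightarrow> \<bar>g s\<bar> \<le> \<bar>s\<bar>"
proof -
  have "eventually (\<lambda>s. dist (g s / s) 0 < 1) (at 0)"
    using tendsto_iff[THEN iffD1, rule_format, OF assms(1), of 1] by simp
  then obtain \<delta> where \<delta>: "\<delta> > 0" "\<And>s. s \<noteq> 0 \<Longrightarrow> dist s 0 < \<delta> \<Longrightarrow> dist (g s / s) 0 < 1"
    unfolding eventually_at by auto
  have "\<bar>g s\<bar> \<le> \<bar>s\<bar>" if "\<bar>s\<bar> < \<delta>" for s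
  proof (cases "s = 0")
    case False
    then have "\<bar>g s / s\<bar> < 1" using \<delta>(2)[of s] that by simp
    then show ?thesis using False by (simp add: abs_divide divide_less_eq)
  qed (simp add: assms(2))
  then show ?thesis using \<delta> by blast
qed

text \<open>Near infinity \<open>\<Phi>\<^sub>\<beta>\<^sup>2 \<le> \<Phi>\<^sub>2\<^sub>\<beta>\<close> is used; on the compact rest, \<open>2\<beta>s\<^sup>2 \<le> \<Phi>\<^sub>2\<^sub>\<beta>(s)\<close> dominates a linear bound.\<close>

lemma abs_le_sqrt_expsq:
  fixes g :: "real \<Rightarrow> real"
  assumes cont: "continuous_on UNIV g" and "0 < \<delta>"
    and near: "\<And>s. \<bar>s\<bar> < \<delta> \<Longrightarrow> \<bar>g s\<bar> \<le> \<bar>s\<bar>"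
    and "0 < \<beta>" and far: "\<And>s. S \<le> \<bar>s\<bar> \<Longrightarrow> \<bar>g s\<bar> \<le> expsq \<beta> s"
  shows "\<exists>K\<ge>0. \<forall>s. \<bar>g s\<bar> \<le> K * sqrt (expsq (2 * \<beta>) s)"
proof -
  have "compact (g ` {-S..S})"
    by (intro compact_continuous_image continuous_on_subset[OF cont]) auto
  then obtain M where "\<forall>s\<in>{-S..S}. \<bar>g s\<bar> \<le> M"
    using compact_imp_bounded[of "g ` {-S..S}"] unfolding bounded_iff by auto
  note M = this[rule_format]
  define c where "c = max 1 (M / \<delta>)"
  have linear: "\<bar>g s\<bar> \<le> c * \<bar>s\<bar>" if "\<bar>s\<bar> \<le> S" for s
  proof (cases "\<bar>s\<bar> < \<delta>")
    case True
    have "\<bar>s\<bar> \<le> c * \<bar>s\<bar>" unfolding c_def by (simp add: mult_le_cancel_right1)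
    then show ?thesis using near[OF True] by linarith
  next
    case False
    have "\<bar>g s\<bar> \<le> M" using M[of s] that by (simp add: abs_le_iff)
    also have "M = (M / \<delta>) * \<delta>" using \<open>0 < \<delta>\<close> by simp
    also have "\<dots> \<le> (M / \<delta>) * \<bar>s\<bar>"
      using False \<open>0 < \<delta>\<close> \<open>\<bar>g s\<bar> \<le> M\<close> by (intro mult_left_mono) auto
    also have "\<dots> \<le> c * \<bar>s\<bar>" unfolding c_def by (intro mult_right_mono) auto
    finally show ?thesis .
  qed
  define K where "K = max 1 (c / sqrt (2 * \<beta>))"
  have "1 \<le> K" unfolding K_def by simp
  have "\<bar>g s\<bar> \<le> K * sqrt (expsq (2 * \<beta>) s)" for s
  proof (cases "\<bar>s\<bar> \<le> S")
    case True
    have "sqrt (2 * \<beta>) * \<bar>s\<bar> = sqrt (2 * \<beta> * s\<^sup>2)" by (simp add: real_sqrt_mult)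
    also have "\<dots> \<le> sqrt (expsq (2 * \<beta>) s)" using mult_power2_le_expsq[of "2 * \<beta>" s] by simp
    finally have sq: "sqrt (2 * \<beta>) * \<bar>s\<bar> \<le> sqrt (expsq (2 * \<beta>) s)" .
    have "c * \<bar>s\<bar> = c / sqrt (2 * \<beta>) * (sqrt (2 * \<beta>) * \<bar>s\<bar>)" using \<open>0 < \<beta>\<close> by simp
    also have "\<dots> \<le> c / sqrt (2 * \<beta>) * sqrt (expsq (2 * \<beta>) s)"
      using sq \<open>0 < \<beta>\<close> by (intro mult_left_mono) (auto simp: c_def)
    also have "\<dots> \<le> K * sqrt (expsq (2 * \<beta>) s)"
      unfolding K_def using expsq_nonneg[of "2 * \<beta>" s] \<open>0 < \<beta>\<close> by (intro mult_right_mono) auto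
    finally show ?thesis using linear[OF True] by linarith
  next
    case False
    then have "\<bar>g s\<bar> \<le> expsq \<beta> s" using far by auto
    also have "\<dots> \<le> sqrt (expsq (2 * \<beta>) s)"
      using power2_expsq_le[of \<beta> s] \<open>0 < \<beta>\<close> by (intro real_le_rsqrt) auto
    also have "\<dots> \<le> K * sqrt (expsq (2 * \<beta>) s)"
      using \<open>1 \<le> K\<close> expsq_nonneg[of "2 * \<beta>" s] \<open>0 < \<beta>\<close> by (simp add: mult_le_cancel_right1)
    finally show ?thesis .
  qed
  then show ?thesis using \<open>1 \<le> K\<close> by (intro exI[of _ K]) auto
qed

section \<open>Increments controlled by the Trudinger--Moser function\<close>

definition expsq_increment_bound :: "real \<Rightarrow> (real \<Rightarrow> real) \<Rightarrow> bool" where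
  "expsq_increment_bound \<kappa> j \<longleftrightarrow>
     (\<forall>\<epsilon>>0. \<exists>C. \<forall>a b. \<bar>j (a + b) - j a\<bar> \<le> \<epsilon> * expsq \<kappa> a + C * expsq \<kappa> b)"

lemma mult_abs_sqrt_le_expsq:
  assumes "0 < \<gamma>" and "0 < \<epsilon>" and "0 \<le> E"
  shows "K * \<bar>b\<bar> * sqrt E \<le> \<epsilon> * E + K\<^sup>2 / (16 * \<epsilon> * \<gamma>) * expsq (4 * \<gamma>) b"
proof -
  define r where "r = sqrt E"
  have E: "E = r\<^sup>2" unfolding r_def using \<open>0 \<le> E\<close> by simp
  have "0 \<le> (2 * \<epsilon> * r - K * \<bar>b\<bar>)\<^sup>2" by simp
  then have "4 * \<epsilon> * (K * \<bar>b\<bar> * r) \<le> 4 * \<epsilon> * (\<epsilon> * E) + K\<^sup>2 * b\<^sup>2"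
    unfolding E by (simp add: power2_eq_square algebra_simps)
  then have "K * \<bar>b\<bar> * r \<le> \<epsilon> * E + K\<^sup>2 / (16 * \<epsilon> * \<gamma>) * (4 * \<gamma> * b\<^sup>2)"
    using assms by (simp add: field_simps)
  also have "\<dots> \<le> \<epsilon> * E + K\<^sup>2 / (16 * \<epsilon> * \<gamma>) * expsq (4 * \<gamma>) b"
    using mult_power2_le_expsq[of "4 * \<gamma>" b] assms by (intro add_left_mono mult_left_mono) auto
  finally show ?thesis unfolding r_def .
qed

lemma abs_mult_sqrt_expsq_le:
  assumes "0 < \<gamma>"
  shows "\<bar>b\<bar> * sqrt (expsq (4 * \<gamma>) b) \<le> expsq (4 * \<gamma>) b / (2 * sqrt \<gamma>)"
proof -
  have "2 * sqrt \<gamma> * \<bar>b\<bar> = sqrt (4 * \<gamma> * b\<^sup>2)"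
    by (simp add: real_sqrt_mult real_sqrt_abs[symmetric] del: real_sqrt_abs)
  also have "\<dots> \<le> sqrt (expsq (4 * \<gamma>) b)" using mult_power2_le_expsq[of "4 * \<gamma>" b] by simp
  finally have "\<bar>b\<bar> \<le> sqrt (expsq (4 * \<gamma>) b) / (2 * sqrt \<gamma>)"
    using assms by (simp add: field_simps)
  then have "\<bar>b\<bar> * sqrt (expsq (4 * \<gamma>) b)
      \<le> sqrt (expsq (4 * \<gamma>) b) / (2 * sqrt \<gamma>) * sqrt (expsq (4 * \<gamma>) b)"
    using expsq_nonneg[of "4 * \<gamma>" b] assms by (intro mult_right_mono) simp_all
  also have "\<dots> = expsq (4 * \<gamma>) b / (2 * sqrt \<gamma>)"
    using expsq_nonneg[of "4 * \<gamma>" b] assms by simp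
  finally show ?thesis .
qed

text \<open>The mean value theorem bounds the increment by \<open>|b| K \<Phi>\<^sub>\<gamma>(|a| + |b|)\<^sup>1\<^sup>/\<^sup>2\<close>; splitting
  \<open>\<Phi>\<^sub>\<gamma>(|a| + |b|) \<le> \<Phi>\<^sub>4\<^sub>\<gamma>(a) + \<Phi>\<^sub>4\<^sub>\<gamma>(b)\<close>, Young's inequality puts the \<open>a\<close>-part into \<open>\<epsilon> \<Phi>\<^sub>4\<^sub>\<gamma>(a)\<close>.\<close>

lemma expsq_increment_boundI:
  fixes j j' :: "real \<Rightarrow> real"
  assumes der: "\<And>s. (j has_real_derivative j' s) (at s)"
    and bound: "\<And>s. \<bar>j' s\<bar> \<le> K * sqrt (expsq \<gamma> s)" and "0 < \<gamma>" and "0 \<le> K"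
  shows "expsq_increment_bound (4 * \<gamma>) j"
  unfolding expsq_increment_bound_def
proof (intro allI impI)
  fix \<epsilon> :: real assume "0 < \<epsilon>"
  define C where "C = K\<^sup>2 / (16 * \<epsilon> * \<gamma>) + K / (2 * sqrt \<gamma>)"
  have "\<bar>j (a + b) - j a\<bar> \<le> \<epsilon> * expsq (4 * \<gamma>) a + C * expsq (4 * \<gamma>) b" for a b
  proof -
    define R where "R = \<bar>a\<bar> + \<bar>b\<bar>"
    define Ea where "Ea = expsq (4 * \<gamma>) a"
    define Eb where "Eb = expsq (4 * \<gamma>) b"
    have "0 \<le> Ea" "0 \<le> Eb" unfolding Ea_def Eb_def using expsq_nonneg \<open>0 < \<gamma>\<close> by auto
    have derivative_bound: "\<bar>j' z\<bar> \<le> K * sqrt (expsq \<gamma> R)" if "z \<in> {-R..R}" for z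
    proof -
      have "\<bar>z\<bar> \<le> R" using that by (simp add: abs_le_iff)
      then have "z\<^sup>2 \<le> R\<^sup>2" by (metis abs_ge_zero power2_abs power_mono)
      then have "sqrt (expsq \<gamma> z) \<le> sqrt (expsq \<gamma> R)" using expsq_mono \<open>0 < \<gamma>\<close> by simp
      then have "K * sqrt (expsq \<gamma> z) \<le> K * sqrt (expsq \<gamma> R)" using \<open>0 \<le> K\<close> by (rule mult_left_mono)
      then show ?thesis using bound[of z] by linarith
    qed
    have "norm (j (a + b) - j a) \<le> K * sqrt (expsq \<gamma> R) * norm (a + b - a)"
      by (rule field_differentiable_bound[of "{-R..R}"])
         (use der derivative_bound in \<open>auto simp: R_def has_field_derivative_at_within\<close>)
    then have "\<bar>j (a + b) - j a\<bar> \<le> K * sqrt (expsq \<gamma> R) * \<bar>b\<bar>" by simp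
    also have "\<dots> \<le> K * (sqrt Ea + sqrt Eb) * \<bar>b\<bar>"
    proof -
      have "sqrt (expsq \<gamma> R) \<le> sqrt (Ea + Eb)"
        using expsq_abs_add_le[of \<gamma> a b] \<open>0 < \<gamma>\<close> unfolding Ea_def Eb_def R_def by simp
      also have "\<dots> \<le> sqrt Ea + sqrt Eb" by (rule sqrt_add_le_add_sqrt) fact+
      finally show ?thesis using \<open>0 \<le> K\<close> by (simp add: mult_left_mono mult_right_mono)
    qed
    also have "\<dots> = K * \<bar>b\<bar> * sqrt Ea + K * (\<bar>b\<bar> * sqrt Eb)" by (simp add: algebra_simps)
    also have "\<dots> \<le> (\<epsilon> * Ea + K\<^sup>2 / (16 * \<epsilon> * \<gamma>) * Eb) + K * (Eb / (2 * sqrt \<gamma>))"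
      using mult_abs_sqrt_le_expsq[OF \<open>0 < \<gamma>\<close> \<open>0 < \<epsilon>\<close> \<open>0 \<le> Ea\<close>, of K b]
        abs_mult_sqrt_expsq_le[OF \<open>0 < \<gamma>\<close>, of b] \<open>0 \<le> K\<close>
      unfolding Eb_def by (intro add_mono mult_left_mono) auto
    also have "\<dots> = \<epsilon> * Ea + C * Eb" unfolding C_def by (simp add: algebra_simps)
    finally show ?thesis unfolding Ea_def Eb_def .
  qed
  then show "\<exists>C. \<forall>a b. \<bar>j (a + b) - j a\<bar> \<le> \<epsilon> * expsq (4 * \<gamma>) a + C * expsq (4 * \<gamma>) b" by blast
qed

section \<open>The nonlinearity\<close>

lemma has_real_derivative_prim:
  assumes "continuous_on UNIV f"
  shows "(prim f has_real_derivative f s) (at s)"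
proof -
  define a where "a = - (\<bar>s\<bar> + 1)"
  define b where "b = \<bar>s\<bar> + 1"
  have cont: "continuous_on {a..b} f" using assms continuous_on_subset by blast
  have integrable: "f integrable_on {c..d}" if "a \<le> c" "d \<le> b" for c d
    using that by (intro integrable_continuous_real continuous_on_subset[OF cont]) auto
  define G where "G x = integral {a..x} f" for x
  have prim_eq: "prim f x = G x - G 0" if "x \<in> {a..b}" for x
  proof (cases "0 \<le> x")
    case True
    have "integral {a..0} f + integral {0..x} f = integral {a..x} f"
      using True that by (intro Henstock_Kurzweil_Integration.integral_combine integrable) (auto simp: a_def)
    then show ?thesis using True unfolding prim_def G_def by simp
  next
    case False
    have "integral {a..x} f + integral {x..0} f = integral {a..0} f"
      using False that by (intro Henstock_Kurzweil_Integration.integral_combine integrable) (auto simp: b_def)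
    then show ?thesis using False unfolding prim_def G_def by simp
  qed
  have "s \<in> interior {a..b}" by (auto simp: a_def b_def)
  moreover have "(G has_real_derivative f s) (at s within {a..b})"
    unfolding G_def by (rule integral_has_real_derivative[OF cont]) (auto simp: a_def b_def)
  ultimately have "(G has_real_derivative f s) (at s)"
    using at_within_interior by metis
  then have "((\<lambda>x. G x - G 0) has_real_derivative f s) (at s)"
    by (auto intro!: derivative_eq_intros)
  then show ?thesis
    by (rule has_field_derivative_transform_within_open[of _ _ _ "{a<..<b}"])
       (use prim_eq in \<open>auto simp: a_def b_def\<close>)
qed

lemma continuous_on_prim: "continuous_on UNIV f \<Longrightarrow> continuous_on UNIV (prim f)"
  by (meson DERIV_isCont continuous_at_imp_continuous_on has_real_derivative_prim)

locale critical_nonlinearity =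
  fixes f :: "real \<Rightarrow> real" and \<alpha>0 :: real
  assumes alpha0_pos: "0 < \<alpha>0"
    and growth_f: "critical_growth \<alpha>0 f"
    and growth_deriv: "critical_growth \<alpha>0 (\<lambda>s. deriv f s * s)"
    and differentiable: "\<forall>s. f differentiable (at s)"
    and continuous_deriv: "continuous_on UNIV (deriv f)"
    and odd: "\<forall>s. f (- s) = - f s"
    and convex: "convex_on {0..} f"
    and ratio_tendsto_zero: "((\<lambda>s. f s / s) \<longlongrightarrow> 0) (at 0)"
    and ratio_mono: "strict_mono_on {0<..} (\<lambda>s. f s / s)"
begin

lemma f_zero [simp]: "f 0 = 0"
  using odd by (metis add.inverse_neutral neg_equal_zero)

lemma has_real_derivative_f: "(f has_real_derivative deriv f s) (at s)"
  using differentiable DERIV_deriv_iff_real_differentiable by blast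

lemma continuous_on_f: "continuous_on UNIV f"
  by (meson DERIV_isCont continuous_at_imp_continuous_on has_real_derivative_f)

lemma deriv_f_zero: "deriv f 0 = 0"
proof -
  have "((\<lambda>y. (f y - f 0) / (y - 0)) \<longlongrightarrow> deriv f 0) (at 0)"
    using has_real_derivative_f[of 0] has_field_derivative_iff by blast
  then have "((\<lambda>y. f y / y) \<longlongrightarrow> deriv f 0) (at 0)" by simp
  then show ?thesis using ratio_tendsto_zero tendsto_unique[OF at_neq_bot] by blast
qed

lemma f_nonneg: assumes "0 \<le> s" shows "0 \<le> f s"
proof (cases "s = 0")
  case False
  then have "0 < s" using assms by simp
  have lim: "((\<lambda>t. f t / t) \<longlongrightarrow> 0) (at_right 0)"
    using ratio_tendsto_zero filterlim_at_split by blast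
  have "eventually (\<lambda>t. f t / t \<le> f s / s) (at_right 0)"
    unfolding eventually_at_right_field using \<open>0 < s\<close> ratio_mono
    by (intro exI[of _ s]) (auto simp: strict_mono_on_def less_imp_le)
  then have "0 \<le> f s / s" using tendsto_le[OF _ tendsto_const lim] by auto
  then show ?thesis using \<open>0 < s\<close> by (simp add: zero_le_divide_iff)
qed simp

lemma f_le_deriv_mult: assumes "0 < s" shows "f s \<le> deriv f s * s"
proof -
  have "f 0 - f s \<ge> deriv f s * (0 - s)"
  proof (rule convex_on_imp_above_tangent[OF convex])
    show "connected {0::real..}" by (simp add: is_interval_connected_1[symmetric] is_interval_ci)
    show "s \<in> interior {0..}" "(0::real) \<in> {0..}" using assms by simp_all
    show "(f has_real_derivative deriv f s) (at s within {0..})"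
      using has_real_derivative_f has_field_derivative_at_within by blast
  qed
  then show ?thesis by simp
qed

lemma deriv_f_even: "deriv f (- s) = deriv f s"
proof -
  have "((\<lambda>x. f (- x)) has_real_derivative (- deriv f (- s))) (at s)"
    using DERIV_mirror has_real_derivative_f[of "- s"] by auto
  moreover have "((\<lambda>x. f (- x)) has_real_derivative (- deriv f s)) (at s)"
    using odd has_real_derivative_f[of s] by (auto intro!: derivative_eq_intros)
  ultimately show ?thesis using DERIV_unique by fastforce
qed

lemma deriv_mult_nonneg: assumes "0 \<le> s" shows "0 \<le> deriv f s * s"
proof (cases "s = 0")
  case False
  then show ?thesis using assms f_le_deriv_mult[of s] f_nonneg[of s] by linarith
qed simp

lemma f_sqrt_expsq_bound:
  assumes "\<alpha>0 < \<beta>"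
  shows "\<exists>K\<ge>0. \<forall>s. \<bar>f s\<bar> \<le> K * sqrt (expsq (2 * \<beta>) s)"
proof -
  have "0 < \<beta>" using alpha0_pos assms by simp
  obtain \<delta> where "\<delta> > 0" "\<And>s. \<bar>s\<bar> < \<delta> \<Longrightarrow> \<bar>f s\<bar> \<le> \<bar>s\<bar>"
    using abs_le_abs_near_zero[OF ratio_tendsto_zero f_zero] by auto
  moreover obtain S where "\<And>s. S \<le> \<bar>s\<bar> \<Longrightarrow> \<bar>f s\<bar> \<le> expsq \<beta> s"
    using critical_growth_abs_le_expsq[OF growth_f assms \<open>0 < \<beta>\<close> f_nonneg] odd by auto
  ultimately show ?thesis using abs_le_sqrt_expsq[OF continuous_on_f _ _ \<open>0 < \<beta>\<close>] by blast
qed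

lemma deriv_mult_sqrt_expsq_bound:
  assumes "\<alpha>0 < \<beta>"
  shows "\<exists>K\<ge>0. \<forall>s. \<bar>deriv f s * s\<bar> \<le> K * sqrt (expsq (2 * \<beta>) s)"
proof -
  have "0 < \<beta>" using alpha0_pos assms by simp
  have "isCont (deriv f) 0" using continuous_deriv by (simp add: continuous_on_eq_continuous_at)
  then have "(deriv f \<longlongrightarrow> 0) (at 0)" using deriv_f_zero by (simp add: isCont_def)
  moreover have "\<forall>\<^sub>F s in at 0. deriv f s = deriv f s * s / s" by (simp add: eventually_at_filter)
  ultimately have "((\<lambda>s. deriv f s * s / s) \<longlongrightarrow> 0) (at 0)" by (rule Lim_transform_eventually)
  then obtain \<delta> where "\<delta> > 0" "\<And>s. \<bar>s\<bar> < \<delta> \<Longrightarrow> \<bar>deriv f s * s\<bar> \<le> \<bar>s\<bar>"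
    using abs_le_abs_near_zero[of "\<lambda>s. deriv f s * s"] by auto
  moreover obtain S where "\<And>s. S \<le> \<bar>s\<bar> \<Longrightarrow> \<bar>deriv f s * s\<bar> \<le> expsq \<beta> s"
    using critical_growth_abs_le_expsq[OF growth_deriv assms \<open>0 < \<beta>\<close> deriv_mult_nonneg] deriv_f_even
    by auto
  moreover have "continuous_on UNIV (\<lambda>s. deriv f s * s)"
    using continuous_deriv by (intro continuous_intros) auto
  ultimately show ?thesis using abs_le_sqrt_expsq[OF _ _ _ \<open>0 < \<beta>\<close>] by blast
qed

lemma increment_bound_mult_id:
  assumes "\<alpha>0 < \<beta>"
  shows "expsq_increment_bound (8 * \<beta>) (\<lambda>s. f s * s)"
proof -
  obtain K1 where "K1 \<ge> 0" and K1: "\<And>s. \<bar>f s\<bar> \<le> K1 * sqrt (expsq (2 * \<beta>) s)"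
    using f_sqrt_expsq_bound[OF assms] by auto
  obtain K2 where "K2 \<ge> 0" and K2: "\<And>s. \<bar>deriv f s * s\<bar> \<le> K2 * sqrt (expsq (2 * \<beta>) s)"
    using deriv_mult_sqrt_expsq_bound[OF assms] by auto
  have "\<bar>deriv f s * s + f s\<bar> \<le> (K2 + K1) * sqrt (expsq (2 * \<beta>) s)" for s
    using K1[of s] K2[of s] abs_triangle_ineq[of "deriv f s * s" "f s"] by (simp add: distrib_right)
  moreover have "((\<lambda>s. f s * s) has_real_derivative deriv f s * s + f s) (at s)" for s
    using has_real_derivative_f[of s] by (auto intro!: derivative_eq_intros)
  ultimately have "expsq_increment_bound (4 * (2 * \<beta>)) (\<lambda>s. f s * s)"
    using \<open>K1 \<ge> 0\<close> \<open>K2 \<ge> 0\<close> alpha0_pos assms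
    by (intro expsq_increment_boundI[where K = "K2 + K1"]) auto
  then show ?thesis by simp
qed

lemma increment_bound_prim:
  assumes "\<alpha>0 < \<beta>"
  shows "expsq_increment_bound (8 * \<beta>) (prim f)"
proof -
  obtain K where "K \<ge> 0" "\<And>s. \<bar>f s\<bar> \<le> K * sqrt (expsq (2 * \<beta>) s)"
    using f_sqrt_expsq_bound[OF assms] by auto
  then have "expsq_increment_bound (4 * (2 * \<beta>)) (prim f)"
    using has_real_derivative_prim[OF continuous_on_f] alpha0_pos assms
    by (intro expsq_increment_boundI) auto
  then show ?thesis by simp
qed

end

section \<open>A Brezis--Lieb lemma\<close>

lemma nn_integral_le_of_AE_tendsto:
  fixes g :: "nat \<Rightarrow> 'a \<Rightarrow> ennreal"
  assumes [measurable]: "\<And>n. g n \<in> borel_measurable M"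
    and lim: "AE x in M. (\<lambda>n. g n x) \<longlonglongrightarrow> h x" and bound: "\<And>n. (\<integral>\<^sup>+x. g n x \<partial>M) \<le> B"
  shows "(\<integral>\<^sup>+x. h x \<partial>M) \<le> B"
proof -
  have "(\<integral>\<^sup>+x. h x \<partial>M) = (\<integral>\<^sup>+x. liminf (\<lambda>n. g n x) \<partial>M)"
    using lim by (intro nn_integral_cong_AE) (simp add: eventually_mono lim_imp_Liminf)
  also have "\<dots> \<le> liminf (\<lambda>n. \<integral>\<^sup>+x. g n x \<partial>M)"
    by (rule nn_integral_liminf) measurable
  also have "\<dots> \<le> limsup (\<lambda>n. \<integral>\<^sup>+x. g n x \<partial>M)"
    by (rule Liminf_le_Limsup) simp
  also have "\<dots> \<le> B"
    using bound by (intro Limsup_bounded) auto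
  finally show ?thesis .
qed

lemma integrable_integral_le_of_nn_integral_le:
  fixes g :: "'a \<Rightarrow> real"
  assumes [measurable]: "g \<in> borel_measurable M" and nonneg: "\<And>x. 0 \<le> g x"
    and bound: "(\<integral>\<^sup>+x. ennreal (g x) \<partial>M) \<le> ennreal B" and "0 \<le> B"
  shows "integrable M g" and "(\<integral>x. g x \<partial>M) \<le> B"
proof -
  show "integrable M g"
    by (rule integrableI_bounded)
       (use bound nonneg in \<open>auto simp: top_unique ennreal_less_top intro: le_less_trans\<close>)
  then have "ennreal (\<integral>x. g x \<partial>M) = (\<integral>\<^sup>+x. ennreal (g x) \<partial>M)"
    using nn_integral_eq_integral[OF \<open>integrable M g\<close>] nonneg by auto
  then show "(\<integral>x. g x \<partial>M) \<le> B"
    using bound \<open>0 \<le> B\<close> by (simp add: ennreal_le_iff[symmetric])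
qed

text \<open>A uniform bound on \<open>\<integral> \<Phi>\<^sub>4\<^sub>\<kappa>(v\<^sub>n)\<close> passes to the limit by Fatou's lemma, and then
  \<open>\<Phi>\<^sub>\<kappa>(v\<^sub>n - w) \<le> \<Phi>\<^sub>4\<^sub>\<kappa>(v\<^sub>n) + \<Phi>\<^sub>4\<^sub>\<kappa>(w)\<close> bounds the remainders.\<close>

lemma expsq_integrable_of_uniform_bound:
  fixes v :: "nat \<Rightarrow> 'a \<Rightarrow> real"
  assumes [measurable]: "\<And>n. v n \<in> borel_measurable M" "w \<in> borel_measurable M"
    and bound: "\<And>n. (\<integral>\<^sup>+x. ennreal (expsq (4 * \<kappa>) (v n x)) \<partial>M) \<le> ennreal B" and "0 \<le> B"
    and lim: "AE x in M. (\<lambda>n. v n x) \<longlonglongrightarrow> w x" and "0 \<le> \<kappa>"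
  shows "integrable M (\<lambda>x. expsq \<kappa> (v n x))" and "integrable M (\<lambda>x. expsq \<kappa> (w x))"
    and "integrable M (\<lambda>x. expsq \<kappa> (v n x - w x))"
    and "(\<integral>x. expsq \<kappa> (v n x - w x) \<partial>M) \<le> 2 * B"
proof -
  have nonneg: "0 \<le> expsq (4 * \<kappa>) s" "0 \<le> expsq \<kappa> s" for s
    using expsq_nonneg \<open>0 \<le> \<kappa>\<close> by auto
  have le4: "expsq \<kappa> s \<le> expsq (4 * \<kappa>) s" for s
    using expsq_mono_coeff \<open>0 \<le> \<kappa>\<close> by simp
  have lim4: "AE x in M. (\<lambda>n. ennreal (expsq (4 * \<kappa>) (v n x))) \<longlonglongrightarrow> ennreal (expsq (4 * \<kappa>) (w x))"
    using lim by eventually_elim (unfold expsq_def, intro tendsto_intros)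
  have "(\<integral>\<^sup>+x. ennreal (expsq (4 * \<kappa>) (w x)) \<partial>M) \<le> ennreal B"
    by (rule nn_integral_le_of_AE_tendsto[OF _ lim4 bound]) measurable
  note w = integrable_integral_le_of_nn_integral_le[OF _ nonneg(1) this \<open>0 \<le> B\<close>, simplified]
  note v = integrable_integral_le_of_nn_integral_le[OF _ nonneg(1) bound \<open>0 \<le> B\<close>, simplified]
  show "integrable M (\<lambda>x. expsq \<kappa> (v n x))"
    by (rule Bochner_Integration.integrable_bound[OF v(1)[of n]]) (simp_all add: nonneg le4)
  show "integrable M (\<lambda>x. expsq \<kappa> (w x))"
    by (rule Bochner_Integration.integrable_bound[OF w(1)]) (simp_all add: nonneg le4)
  have sum: "integrable M (\<lambda>x. expsq (4 * \<kappa>) (v n x) + expsq (4 * \<kappa>) (w x))"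
    using v(1)[of n] w(1) by (rule Bochner_Integration.integrable_add)
  have diff_le: "expsq \<kappa> (v n x - w x) \<le> expsq (4 * \<kappa>) (v n x) + expsq (4 * \<kappa>) (w x)" for x
    using expsq_diff_le \<open>0 \<le> \<kappa>\<close> by blast
  show diff: "integrable M (\<lambda>x. expsq \<kappa> (v n x - w x))"
    by (rule Bochner_Integration.integrable_bound[OF sum]) (simp_all add: nonneg diff_le add_nonneg_nonneg)
  have "(\<integral>x. expsq \<kappa> (v n x - w x) \<partial>M) \<le> (\<integral>x. expsq (4 * \<kappa>) (v n x) + expsq (4 * \<kappa>) (w x) \<partial>M)"
    by (rule integral_mono[OF diff sum diff_le])
  also have "\<dots> = (\<integral>x. expsq (4 * \<kappa>) (v n x) \<partial>M) + (\<integral>x. expsq (4 * \<kappa>) (w x) \<partial>M)"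
    using v(1)[of n] w(1) by (rule Bochner_Integration.integral_add)
  also have "\<dots> \<le> 2 * B" using v(2)[of n] w(2) by simp
  finally show "(\<integral>x. expsq \<kappa> (v n x - w x) \<partial>M) \<le> 2 * B" .
qed

lemma expsq_increment_boundD:
  "expsq_increment_bound \<kappa> j \<Longrightarrow> 0 < \<epsilon> \<Longrightarrow>
    \<exists>C. \<forall>a b. \<bar>j (a + b) - j a\<bar> \<le> \<epsilon> * expsq \<kappa> a + C * expsq \<kappa> b"
  by (simp add: expsq_increment_bound_def)

lemma expsq_increment_bound_abs_le:
  assumes "expsq_increment_bound \<kappa> j" and "j 0 = 0" and "0 \<le> \<kappa>"
  shows "\<exists>C\<ge>0. \<forall>s. \<bar>j s\<bar> \<le> C * expsq \<kappa> s"
proof -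
  obtain C where C: "\<And>a b. \<bar>j (a + b) - j a\<bar> \<le> 1 * expsq \<kappa> a + C * expsq \<kappa> b"
    using expsq_increment_boundD[OF assms(1) zero_less_one] by blast
  have "\<bar>j s\<bar> \<le> max C 0 * expsq \<kappa> s" for s
  proof -
    have "\<bar>j s\<bar> \<le> C * expsq \<kappa> s" using C[of 0 s] assms(2) by simp
    also have "\<dots> \<le> max C 0 * expsq \<kappa> s" using expsq_nonneg[OF assms(3)] by (intro mult_right_mono) auto
    finally show ?thesis .
  qed
  then show ?thesis by (intro exI[of _ "max C 0"]) auto
qed

lemma integral_excess_tendsto_zero:
  fixes g h :: "nat \<Rightarrow> 'a \<Rightarrow> real"
  assumes [measurable]: "\<And>n. g n \<in> borel_measurable M" "\<And>n. h n \<in> borel_measurable M"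
    and "integrable M G" and h_nonneg: "\<And>n x. 0 \<le> h n x" and G_nonneg: "\<And>x. 0 \<le> G x"
    and dominated: "\<And>n x. g n x \<le> h n x + G x"
    and lim: "AE x in M. (\<lambda>n. g n x) \<longlonglongrightarrow> 0"
  shows "(\<lambda>n. \<integral>x. max 0 (g n x - h n x) \<partial>M) \<longlonglongrightarrow> 0"
proof -
  have ae_lim: "AE x in M. (\<lambda>n. max 0 (g n x - h n x)) \<longlonglongrightarrow> 0"
    using lim
  proof eventually_elim
    case (elim x)
    have lim_max: "(\<lambda>n. max 0 (g n x)) \<longlonglongrightarrow> 0"
      using elim tendsto_max[OF tendsto_const, of "\<lambda>n. g n x" 0 sequentially 0] by simp
    have upper: "max 0 (g n x - h n x) \<le> max 0 (g n x)" for n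
      using h_nonneg[of n x] by (intro max.mono) simp_all
    show ?case
      by (rule tendsto_sandwich[OF always_eventually always_eventually tendsto_const lim_max])
         (simp, blast intro: upper)
  qed
  have "norm (max 0 (g n x - h n x)) \<le> G x" for n x
    using dominated[of n x] G_nonneg[of x] by simp
  then have dominated': "AE x in M. norm (max 0 (g n x - h n x)) \<le> G x" for n
    by simp
  have "(\<lambda>n. \<integral>x. max 0 (g n x - h n x) \<partial>M) \<longlonglongrightarrow> (\<integral>x. 0 \<partial>M)"
    by (rule integral_dominated_convergence[OF _ _ \<open>integrable M G\<close> ae_lim dominated']; measurable)
  then show ?thesis by simp
qed

lemma integral_tendsto_zero_of_excess:
  fixes g :: "nat \<Rightarrow> 'a \<Rightarrow> real"
  assumes integrable: "\<And>n. integrable M (g n)" and nonneg: "\<And>n x. 0 \<le> g n x"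
    and excess: "\<And>\<epsilon>. 0 < \<epsilon> \<Longrightarrow> \<exists>h. (\<forall>n. integrable M (h n) \<and> (\<integral>x. h n x \<partial>M) \<le> \<epsilon>) \<and>
      (\<lambda>n. \<integral>x. max 0 (g n x - h n x) \<partial>M) \<longlonglongrightarrow> 0"
  shows "(\<lambda>n. \<integral>x. g n x \<partial>M) \<longlonglongrightarrow> 0"
proof (rule LIMSEQ_I)
  fix e :: real assume "0 < e"
  then obtain h where h: "\<And>n. integrable M (h n)" "\<And>n. (\<integral>x. h n x \<partial>M) \<le> e / 2"
    and lim: "(\<lambda>n. \<integral>x. max 0 (g n x - h n x) \<partial>M) \<longlonglongrightarrow> 0"
    using excess[of "e / 2"] by auto
  have "eventually (\<lambda>n. (\<integral>x. max 0 (g n x - h n x) \<partial>M) < e / 2) sequentially"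
    using \<open>0 < e\<close> lim by (intro order_tendstoD(2)) auto
  then obtain N where N: "\<And>n. n \<ge> N \<Longrightarrow> (\<integral>x. max 0 (g n x - h n x) \<partial>M) < e / 2"
    unfolding eventually_sequentially by blast
  have "norm ((\<integral>x. g n x \<partial>M) - 0) < e" if "n \<ge> N" for n
  proof -
    have excess_integrable: "integrable M (\<lambda>x. max 0 (g n x - h n x))"
      using integrable[of n] h(1)[of n] by simp
    have "(\<integral>x. g n x \<partial>M) \<le> (\<integral>x. max 0 (g n x - h n x) + h n x \<partial>M)"
      by (rule integral_mono[OF integrable Bochner_Integration.integrable_add[OF excess_integrable h(1)]])
         simp
    also have "\<dots> = (\<integral>x. max 0 (g n x - h n x) \<partial>M) + (\<integral>x. h n x \<partial>M)"
      using excess_integrable h(1)[of n] by simp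
    also have "\<dots> < e" using N[OF that] h(2)[of n] by simp
    finally show ?thesis using integral_nonneg_AE[of "g n" M] nonneg by simp
  qed
  then show "\<exists>N. \<forall>n\<ge>N. norm ((\<integral>x. g n x \<partial>M) - 0) < e" by blast
qed

text \<open>The remainder \<open>|j(v\<^sub>n) - j(v\<^sub>n - w) - j(w)|\<close> exceeds \<open>\<epsilon> \<Phi>\<^sub>\<kappa>(v\<^sub>n - w)\<close>, whose integral
  is uniformly \<open>O(\<epsilon>)\<close>, by at most \<open>C\<^sub>\<epsilon> \<Phi>\<^sub>\<kappa>(w)\<close>, so the excess vanishes by dominated convergence.\<close>

lemma brezis_lieb_expsq:
  fixes j :: "real \<Rightarrow> real" and v :: "nat \<Rightarrow> real \<Rightarrow> real" and w :: "real \<Rightarrow> real"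
  assumes "continuous_on UNIV j" and "j 0 = 0" and increment: "expsq_increment_bound \<kappa> j"
    and "0 < \<kappa>" and [measurable]: "\<And>n. v n \<in> borel_measurable lborel" "w \<in> borel_measurable lborel"
    and bound: "\<And>n. (\<integral>\<^sup>+x. ennreal (expsq (4 * \<kappa>) (v n x)) \<partial>lborel) \<le> ennreal B" and "0 \<le> B"
    and lim: "AE x in lborel. (\<lambda>n. v n x) \<longlonglongrightarrow> w x"
  shows "(\<lambda>n. (\<integral>x. j (v n x) \<partial>lborel) - (\<integral>x. j (v n x - w x) \<partial>lborel) - (\<integral>x. j (w x) \<partial>lborel))
    \<longlonglongrightarrow> 0"
proof -
  have [measurable]: "j \<in> borel_measurable borel"
    using \<open>continuous_on UNIV j\<close> by (rule borel_measurable_continuous_onI)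
  note E = expsq_integrable_of_uniform_bound[OF assms(5,6) bound \<open>0 \<le> B\<close> lim less_imp_le[OF \<open>0 < \<kappa>\<close>]]
  have E_nonneg: "0 \<le> expsq \<kappa> s" for s using expsq_nonneg \<open>0 < \<kappa>\<close> by simp
  obtain C0 where "C0 \<ge> 0" and C0: "\<And>s. \<bar>j s\<bar> \<le> C0 * expsq \<kappa> s"
    using expsq_increment_bound_abs_le[OF increment \<open>j 0 = 0\<close>] \<open>0 < \<kappa>\<close> by auto
  have integrable_j: "integrable lborel (\<lambda>x. j (u x))"
    if [measurable]: "u \<in> borel_measurable lborel" and "integrable lborel (\<lambda>x. expsq \<kappa> (u x))" for u
    by (rule Bochner_Integration.integrable_bound[OF integrable_mult_right[OF that(2), of C0]])
       (use C0 E_nonneg \<open>C0 \<ge> 0\<close> in \<open>auto simp: abs_mult\<close>)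
  have i1: "integrable lborel (\<lambda>x. j (v n x))" for n by (rule integrable_j[OF _ E(1)]) measurable
  have i2: "integrable lborel (\<lambda>x. j (v n x - w x))" for n by (rule integrable_j[OF _ E(3)]) measurable
  have i3: "integrable lborel (\<lambda>x. j (w x))" by (rule integrable_j[OF _ E(2)]) measurable
  define g where "g n x = \<bar>j (v n x) - j (v n x - w x) - j (w x)\<bar>" for n x
  have g_measurable [measurable]: "g n \<in> borel_measurable lborel" for n unfolding g_def by measurable
  have integrable_g: "integrable lborel (g n)" for n
    unfolding g_def by (intro integrable_abs Bochner_Integration.integrable_diff i1 i2 i3)
  have g_lim: "AE x in lborel. (\<lambda>n. g n x) \<longlonglongrightarrow> 0"
    using lim
  proof eventually_elim
    case (elim x)
    have cont: "isCont j s" for s using \<open>continuous_on UNIV j\<close> by (simp add: continuous_on_eq_continuous_at)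
    have diff: "(\<lambda>n. v n x - w x) \<longlonglongrightarrow> 0" using elim by (simp add: LIM_zero)
    have "(\<lambda>n. g n x) \<longlonglongrightarrow> \<bar>j (w x) - j 0 - j (w x)\<bar>"
      unfolding g_def by (intro tendsto_intros isCont_tendsto_compose[OF cont] elim diff)
    then show ?case using \<open>j 0 = 0\<close> by simp
  qed
  have lim_g: "(\<lambda>n. \<integral>x. g n x \<partial>lborel) \<longlonglongrightarrow> 0"
  proof (rule integral_tendsto_zero_of_excess[OF integrable_g])
    show "0 \<le> g n x" for n x unfolding g_def by simp
    fix \<epsilon> :: real assume "0 < \<epsilon>"
    define \<delta> where "\<delta> = \<epsilon> / (2 * B + 1)"
    have "0 < \<delta>" unfolding \<delta>_def using \<open>0 < \<epsilon>\<close> \<open>0 \<le> B\<close> by simp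
    then obtain C where C: "\<And>a b. \<bar>j (a + b) - j a\<bar> \<le> \<delta> * expsq \<kappa> a + C * expsq \<kappa> b"
      using expsq_increment_boundD[OF increment] by blast
    define h where "h n x = \<delta> * expsq \<kappa> (v n x - w x)" for n x
    have h_measurable: "h n \<in> borel_measurable lborel" for n unfolding h_def by measurable
    have g_le: "g n x \<le> h n x + (max C 0 + C0) * expsq \<kappa> (w x)" for n x
    proof -
      have "g n x \<le> \<bar>j (v n x - w x + w x) - j (v n x - w x)\<bar> + \<bar>j (w x)\<bar>" unfolding g_def by simp
      also have "\<dots> \<le> h n x + C * expsq \<kappa> (w x) + C0 * expsq \<kappa> (w x)"
        using C[of "v n x - w x" "w x"] C0[of "w x"] unfolding h_def by linarith
      also have "\<dots> \<le> h n x + (max C 0 + C0) * expsq \<kappa> (w x)"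
        using E_nonneg[of "w x"] by (simp add: distrib_right mult_right_mono)
      finally show ?thesis .
    qed
    have "integrable lborel (\<lambda>x. (max C 0 + C0) * expsq \<kappa> (w x))" using E(2) by simp
    moreover have "0 \<le> h n x" for n x unfolding h_def using \<open>0 < \<delta>\<close> E_nonneg by simp
    moreover have "0 \<le> (max C 0 + C0) * expsq \<kappa> (w x)" for x using \<open>C0 \<ge> 0\<close> E_nonneg by simp
    ultimately have "(\<lambda>n. \<integral>x. max 0 (g n x - h n x) \<partial>lborel) \<longlonglongrightarrow> 0"
      using integral_excess_tendsto_zero[OF g_measurable h_measurable _ _ _ g_le g_lim] by blast
    moreover have "integrable lborel (h n)" for n unfolding h_def using E(3) by simp
    moreover have "(\<integral>x. h n x \<partial>lborel) \<le> \<epsilon>" for n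
    proof -
      have "(\<integral>x. h n x \<partial>lborel) = \<delta> * (\<integral>x. expsq \<kappa> (v n x - w x) \<partial>lborel)" unfolding h_def by simp
      also have "\<dots> \<le> \<delta> * (2 * B + 1)" using E(4)[of n] \<open>0 < \<delta>\<close> by (intro mult_left_mono) auto
      also have "\<dots> = \<epsilon>" unfolding \<delta>_def using \<open>0 \<le> B\<close> by simp
      finally show ?thesis .
    qed
    ultimately show "\<exists>h. (\<forall>n. integrable lborel (h n) \<and> (\<integral>x. h n x \<partial>lborel) \<le> \<epsilon>) \<and>
        (\<lambda>n. \<integral>x. max 0 (g n x - h n x) \<partial>lborel) \<longlonglongrightarrow> 0"
      by blast
  qed
  have bound_g: "norm ((\<integral>x. j (v n x) \<partial>lborel) - (\<integral>x. j (v n x - w x) \<partial>lborel) - (\<integral>x. j (w x) \<partial>lborel))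
      \<le> (\<integral>x. g n x \<partial>lborel)" for n
  proof -
    have "(\<integral>x. j (v n x) \<partial>lborel) - (\<integral>x. j (v n x - w x) \<partial>lborel) - (\<integral>x. j (w x) \<partial>lborel)
        = (\<integral>x. j (v n x) - j (v n x - w x) - j (w x) \<partial>lborel)"
      using i1[of n] i2[of n] i3 by simp
    then show ?thesis unfolding g_def by (simp only: real_norm_def integral_abs_bound)
  qed
  show ?thesis
    using bound_g by (intro Lim_null_comparison[OF _ lim_g] always_eventually allI)
qed

section \<open>Weak convergence in \<open>H\<^sup>1\<^sup>/\<^sup>2\<close> and almost everywhere convergence\<close>

lemma H12D:
  assumes "v \<in> H12"
  shows "v \<in> borel_measurable lborel" "integrable lborel (\<lambda>x. (v x)\<^sup>2)" "gagliardo v < \<infinity>"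
  using assms unfolding H12_def by auto

lemma sqrt_integral_power2_le_H12_norm: assumes "v \<in> H12" shows "sqrt (\<integral>x. (v x)\<^sup>2 \<partial>lborel) \<le> H12_norm v"
  unfolding H12_norm_def by (simp add: enn2real_nonneg)

lemma power2_H12_norm: assumes "v \<in> H12"
  shows "(H12_norm v)\<^sup>2 = (\<integral>x. (v x)\<^sup>2 \<partial>lborel) + enn2real (gagliardo v)"
  unfolding H12_norm_def by (simp add: enn2real_nonneg)

lemma emeasure_lborel_Ico_finite[simp]: "emeasure lborel {a..<b::real} < top"
proof -
  have "emeasure lborel {a..<b::real} \<le> emeasure lborel {a..b}" by (intro emeasure_mono) auto
  also have "\<dots> < top" by (cases "a \<le> b") auto
  finally show ?thesis .
qed

lemma integrable_indicator_mult:
  assumes "v \<in> H12"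
  shows "integrable lborel (\<lambda>x. indicator {a..<b} x * v x)"
proof -
  have [measurable]: "v \<in> borel_measurable lborel" using H12D[OF assms] by simp
  have i: "integrable lborel (\<lambda>x. indicator {a..<b} x + (v x)\<^sup>2 :: real)"
    using H12D(2)[OF assms] by (intro Bochner_Integration.integrable_add integrable_real_indicator) auto
  have b: "norm (indicator {a..<b} x * v x) \<le> norm (indicator {a..<b} x + (v x)\<^sup>2 :: real)" for x
  proof -
    have "\<bar>v x\<bar> \<le> 1 + (v x)\<^sup>2"
    proof (cases "\<bar>v x\<bar> \<le> 1")
      case True then show ?thesis by (simp add: add_increasing2)
    next
      case False
      then have "\<bar>v x\<bar> * 1 \<le> \<bar>v x\<bar> * \<bar>v x\<bar>" by (intro mult_left_mono) auto
      then show ?thesis by (simp add: power2_eq_square abs_mult_self_eq)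
    qed
    then show ?thesis by (auto simp: indicator_def)
  qed
  show ?thesis by (rule Bochner_Integration.integrable_bound[OF i]) (use b in auto)
qed

lemma integrable_indicator_mult_power2:
  assumes "v \<in> H12"
  shows "integrable lborel (\<lambda>x. indicator {a..<b} x * (v x)\<^sup>2)"
proof -
  have [measurable]: "v \<in> borel_measurable lborel" using H12D[OF assms] by simp
  show ?thesis by (rule Bochner_Integration.integrable_bound[OF H12D(2)[OF assms]]) (auto simp: indicator_def)
qed

lemma abs_integral_indicator_mult_le:
  assumes v: "v \<in> H12" and ab: "a \<le> b"
  shows "\<bar>\<integral>x. indicator {a..<b} x * v x \<partial>lborel\<bar> \<le> sqrt (b - a) * sqrt (\<integral>x. (v x)\<^sup>2 \<partial>lborel)"
proof -
  have [measurable]: "v \<in> borel_measurable lborel" using H12D[OF v] by simp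
  define A where "A = (\<integral>x. (v x)\<^sup>2 \<partial>lborel)"
  have A0: "0 \<le> A" unfolding A_def by simp
  consider "A = 0" | "b = a" | "A > 0" "b > a" using A0 ab by linarith
  then show ?thesis
  proof cases
    case 1
    have "AE x in lborel. (v x)\<^sup>2 = 0"
      using integral_nonneg_eq_0_iff_AE[OF H12D(2)[OF v]] 1 unfolding A_def by simp
    then have "AE x in lborel. indicator {a..<b} x * v x = 0" by auto
    moreover have m1: "(\<lambda>x. indicator {a..<b} x * v x) \<in> borel_measurable lborel" by measurable
    ultimately have "(\<integral>x. indicator {a..<b} x * v x \<partial>lborel) = (\<integral>x. 0 \<partial>lborel)"
      using integral_cong_AE[OF m1, of "\<lambda>x. 0"] by simp
    then show ?thesis using ab by simp
  next
    case 2 then show ?thesis by simp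
  next
    case 3
    define t where "t = sqrt A / sqrt (b - a)"
    have t0: "t > 0" unfolding t_def using 3 by simp
    have pw: "\<bar>indicator {a..<b} x * v x\<bar> \<le> (t * indicator {a..<b} x + (v x)\<^sup>2 / t) / 2" for x
    proof (cases "x \<in> {a..<b}")
      case True
      have "0 \<le> (t - \<bar>v x\<bar>)\<^sup>2" by simp
      then have "2 * t * \<bar>v x\<bar> \<le> t * t + (v x)\<^sup>2" by (simp add: power2_eq_square algebra_simps)
      then show ?thesis using True t0 by (simp add: field_simps power2_eq_square)
    next
      case False then show ?thesis using t0 by simp
    qed
    have ii: "integrable lborel (\<lambda>x. (t * indicator {a..<b} x + (v x)\<^sup>2 / t) / 2 :: real)"
      using H12D(2)[OF v] by (intro integrable_divide Bochner_Integration.integrable_add integrable_mult_right integrable_real_indicator) auto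
    have "\<bar>\<integral>x. indicator {a..<b} x * v x \<partial>lborel\<bar> \<le> (\<integral>x. (t * indicator {a..<b} x + (v x)\<^sup>2 / t) / 2 \<partial>lborel)"
      by (rule integral_abs_bound_integral[OF integrable_indicator_mult[OF v] ii]) (use pw in auto)
    also have "\<dots> = (t * (b - a) + A / t) / 2"
      using H12D(2)[OF v] 3 unfolding A_def by (simp add: Bochner_Integration.integral_add)
    also have "\<dots> = sqrt (b - a) * sqrt A"
    proof -
      have sA: "sqrt A * sqrt A = A" "sqrt (b-a) * sqrt (b-a) = b - a" using 3 by auto
      have "t * (b - a) = sqrt A * sqrt (b - a)" unfolding t_def using 3 sA(2)
        by (simp add: field_simps)
      moreover have "A / t = sqrt A * sqrt (b - a)" unfolding t_def using 3 sA(1)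
        by (simp add: field_simps)
      ultimately show ?thesis by simp
    qed
    finally show ?thesis unfolding A_def .
  qed
qed

lemma interval_integral_in_H12_dual:
  assumes ab: "a \<le> b"
  shows "(\<lambda>v. \<integral>x. indicator {a..<b} x * v x \<partial>lborel) \<in> H12_dual"
  unfolding H12_dual_def
proof (intro CollectI conjI ballI allI)
  fix v w :: "real \<Rightarrow> real" and \<alpha> \<beta> :: real
  assume v: "v \<in> H12" and w: "w \<in> H12"
  have "(\<integral>x. indicator {a..<b} x * (\<alpha> * v x + \<beta> * w x) \<partial>lborel)
      = (\<integral>x. \<alpha> * (indicator {a..<b} x * v x) + \<beta> * (indicator {a..<b} x * w x) \<partial>lborel)"
    by (simp add: algebra_simps)
  also have "\<dots> = \<alpha> * (\<integral>x. indicator {a..<b} x * v x \<partial>lborel) + \<beta> * (\<integral>x. indicator {a..<b} x * w x \<partial>lborel)"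
    using integrable_indicator_mult[OF v] integrable_indicator_mult[OF w] by (simp add: Bochner_Integration.integral_add)
  finally show "(\<integral>x. indicator {a..<b} x * (\<alpha> * v x + \<beta> * w x) \<partial>lborel)
      = \<alpha> * (\<integral>x. indicator {a..<b} x * v x \<partial>lborel) + \<beta> * (\<integral>x. indicator {a..<b} x * w x \<partial>lborel)" .
next
  show "\<exists>C. \<forall>v\<in>H12. \<bar>\<integral>x. indicator {a..<b} x * v x \<partial>lborel\<bar> \<le> C * H12_norm v"
  proof (intro exI ballI)
    fix v assume v: "v \<in> H12"
    have "\<bar>\<integral>x. indicator {a..<b} x * v x \<partial>lborel\<bar> \<le> sqrt (b - a) * sqrt (\<integral>x. (v x)\<^sup>2 \<partial>lborel)"
      by (rule abs_integral_indicator_mult_le[OF v ab])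
    also have "\<dots> \<le> sqrt (b - a) * H12_norm v" using ab by (intro mult_left_mono sqrt_integral_power2_le_H12_norm v) auto
    finally show "\<bar>\<integral>x. indicator {a..<b} x * v x \<partial>lborel\<bar> \<le> sqrt (b - a) * H12_norm v" .
  qed
qed

lemma integral_indicator_mult_power2_diff:
  assumes v: "v \<in> H12"
  shows "(\<integral>x. indicator {c..<d} x * (v x - t)\<^sup>2 \<partial>lborel) =
    (\<integral>x. indicator {c..<d} x * (v x)\<^sup>2 \<partial>lborel) - 2 * t * (\<integral>x. indicator {c..<d} x * v x \<partial>lborel)
      + t\<^sup>2 * measure lborel {c..<d}"
proof -
  have "(\<integral>x. indicator {c..<d} x * (v x - t)\<^sup>2 \<partial>lborel) =
     (\<integral>x. indicator {c..<d} x * (v x)\<^sup>2 - (2 * t) * (indicator {c..<d} x * v x) + t\<^sup>2 * indicator {c..<d} x \<partial>lborel)"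
    by (intro Bochner_Integration.integral_cong) (auto simp: indicator_def power2_eq_square algebra_simps)
  also have "\<dots> = (\<integral>x. indicator {c..<d} x * (v x)\<^sup>2 \<partial>lborel) - 2 * t * (\<integral>x. indicator {c..<d} x * v x \<partial>lborel)
      + t\<^sup>2 * measure lborel {c..<d}"
    using integrable_indicator_mult[OF v] integrable_indicator_mult_power2[OF v]
    by (subst Bochner_Integration.integral_add) (auto intro!: integrable_real_indicator simp: Bochner_Integration.integral_diff)
  finally show ?thesis .
qed

lemma interval_mean_minimizes_deviation:
  assumes v: "v \<in> H12" and cd: "c < d"
  defines "m \<equiv> (\<integral>x. indicator {c..<d} x * v x \<partial>lborel) / (d - c)"
  shows "(\<integral>x. indicator {c..<d} x * (v x - m)\<^sup>2 \<partial>lborel) \<le> (\<integral>x. indicator {c..<d} x * (v x - t)\<^sup>2 \<partial>lborel)"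
proof -
  define P where "P = (\<integral>x. indicator {c..<d} x * (v x)\<^sup>2 \<partial>lborel)"
  define Q where "Q = (\<integral>x. indicator {c..<d} x * v x \<partial>lborel)"
  have h: "measure lborel {c..<d} = d - c" using cd by simp
  have Qm: "Q = m * (d - c)" unfolding m_def Q_def using cd by simp
  have "P - 2 * m * Q + m\<^sup>2 * (d - c) \<le> P - 2 * t * Q + t\<^sup>2 * (d - c)"
  proof -
    have "(P - 2 * t * Q + t\<^sup>2 * (d - c)) - (P - 2 * m * Q + m\<^sup>2 * (d - c)) = (d - c) * (t - m)\<^sup>2"
      unfolding Qm by (simp add: power2_eq_square algebra_simps)
    moreover have "0 \<le> (d - c) * (t - m)\<^sup>2" using cd by simp
    ultimately show ?thesis by linarith
  qed
  then show ?thesis using integral_indicator_mult_power2_diff[OF v, of c d m] integral_indicator_mult_power2_diff[OF v, of c d t] h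
    unfolding P_def Q_def by simp
qed

definition gagliardo_density :: "(real \<Rightarrow> real) \<Rightarrow> real \<times> real \<Rightarrow> ennreal" where
  "gagliardo_density v z = ennreal ((v (fst z) - v (snd z))\<^sup>2 / (fst z - snd z)\<^sup>2)"

lemma gagliardo_eq_nn_integral_density: "gagliardo v = (\<integral>\<^sup>+z. gagliardo_density v z \<partial>(lborel \<Otimes>\<^sub>M lborel))"
  unfolding gagliardo_def gagliardo_density_def ..

lemma borel_measurable_lborel_pair_iff: "f \<in> borel_measurable (lborel \<Otimes>\<^sub>M lborel) \<longleftrightarrow> f \<in> borel_measurable (borel \<Otimes>\<^sub>M borel)"
  by (simp add: measurable_cong_sets[OF sets_pair_measure_cong[OF sets_lborel sets_lborel] refl])

lemma gagliardo_density_measurable[measurable]: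
  assumes [measurable]: "v \<in> borel_measurable borel"
  shows "gagliardo_density v \<in> borel_measurable (lborel \<Otimes>\<^sub>M lborel)"
  unfolding gagliardo_density_def borel_measurable_lborel_pair_iff by measurable

lemma integrable_indicator_mult_power2_diff:
  assumes v: "v \<in> H12"
  shows "integrable lborel (\<lambda>x. indicator {c..<d} x * (v x - t)\<^sup>2)"
proof -
  have "integrable lborel (\<lambda>x. indicator {c..<d} x * (v x)\<^sup>2 - (2 * t) * (indicator {c..<d} x * v x) + t\<^sup>2 * indicator {c..<d} x)"
    using integrable_indicator_mult[OF v] integrable_indicator_mult_power2[OF v]
    by (intro Bochner_Integration.integrable_add Bochner_Integration.integrable_diff integrable_mult_right integrable_real_indicator) auto
  then show ?thesis
    by (rule back_subst[of "integrable lborel"]) (auto simp: indicator_def power2_eq_square algebra_simps fun_eq_iff)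
qed

lemma power2_diff_le_gagliardo_density:
  assumes "x \<in> {c..<d}" and "y \<in> {c..<d}"
  shows "ennreal ((v x - v y)\<^sup>2) \<le> ennreal ((d - c)\<^sup>2) * gagliardo_density v (y, x)"
proof -
  have "(v x - v y)\<^sup>2 \<le> (d - c)\<^sup>2 * ((v y - v x)\<^sup>2 / (y - x)\<^sup>2)"
  proof (cases "x = y")
    case False
    have "\<bar>y - x\<bar> \<le> d - c" using assms by auto
    then have "(y - x)\<^sup>2 \<le> (d - c)\<^sup>2" by (metis abs_ge_zero power2_abs power_mono)
    then have "(v y - v x)\<^sup>2 / (y - x)\<^sup>2 * (y - x)\<^sup>2 \<le> (v y - v x)\<^sup>2 / (y - x)\<^sup>2 * (d - c)\<^sup>2"
      by (intro mult_left_mono) auto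
    then show ?thesis using False by (simp add: power2_commute mult.commute)
  qed simp
  then show ?thesis unfolding gagliardo_density_def
    by (simp add: ennreal_mult'[symmetric] ennreal_leI)
qed

lemma poincare_interval:
  assumes v: "v \<in> H12" and cd: "c < d"
  defines "m \<equiv> (\<integral>x. indicator {c..<d} x * v x \<partial>lborel) / (d - c)"
  shows "ennreal ((d - c) * (\<integral>x. indicator {c..<d} x * (v x - m)\<^sup>2 \<partial>lborel))
    \<le> ennreal ((d - c)\<^sup>2) * (\<integral>\<^sup>+z. indicator ({c..<d} \<times> {c..<d}) z * gagliardo_density v z \<partial>(lborel \<Otimes>\<^sub>M lborel))"
proof -
  have [measurable]: "v \<in> borel_measurable lborel" "v \<in> borel_measurable borel" using H12D[OF v] by simp_all
  define h where "h = d - c"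
  have h0: "0 < h" unfolding h_def using cd by simp
  define X where "X = (\<integral>x. indicator {c..<d} x * (v x - m)\<^sup>2 \<partial>lborel)"
  have X0: "0 \<le> X" unfolding X_def by (intro integral_nonneg_AE) auto
  have "ennreal (h * X) = (\<integral>\<^sup>+y. ennreal X * indicator {c..<d} y \<partial>lborel)"
    using cd by (subst nn_integral_cmult_indicator) (auto simp: h_def ennreal_mult' X0 mult.commute)
  also have "\<dots> \<le> (\<integral>\<^sup>+y. (\<integral>\<^sup>+x. ennreal (indicator {c..<d} x * (v x - v y)\<^sup>2) \<partial>lborel) * indicator {c..<d} y \<partial>lborel)"
  proof (intro nn_integral_mono)
    fix y
    have "X \<le> (\<integral>x. indicator {c..<d} x * (v x - v y)\<^sup>2 \<partial>lborel)"
      unfolding X_def m_def by (rule interval_mean_minimizes_deviation[OF v cd])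
    also have "ennreal \<dots> = (\<integral>\<^sup>+x. ennreal (indicator {c..<d} x * (v x - v y)\<^sup>2) \<partial>lborel)"
      by (rule nn_integral_eq_integral[OF integrable_indicator_mult_power2_diff[OF v], symmetric]) auto
    finally have "ennreal X \<le> (\<integral>\<^sup>+x. ennreal (indicator {c..<d} x * (v x - v y)\<^sup>2) \<partial>lborel)"
      by (simp add: ennreal_leI)
    then show "ennreal X * indicator {c..<d} y \<le> (\<integral>\<^sup>+x. ennreal (indicator {c..<d} x * (v x - v y)\<^sup>2) \<partial>lborel) * indicator {c..<d} y"
      by (intro mult_right_mono) auto
  qed
  also have "\<dots> \<le> (\<integral>\<^sup>+y. (\<integral>\<^sup>+x. ennreal (h\<^sup>2) * (indicator ({c..<d} \<times> {c..<d}) (y, x) * gagliardo_density v (y, x)) \<partial>lborel) \<partial>lborel)"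
  proof (intro nn_integral_mono)
    fix y
    have "ennreal (indicator {c..<d} x * (v x - v y)\<^sup>2) * indicator {c..<d} y
        \<le> ennreal (h\<^sup>2) * (indicator ({c..<d} \<times> {c..<d}) (y, x) * gagliardo_density v (y, x))" for x
      using power2_diff_le_gagliardo_density[of x c d y v] unfolding h_def
      by (cases "x \<in> {c..<d}"; cases "y \<in> {c..<d}") auto
    moreover have "(\<integral>\<^sup>+x. ennreal (indicator {c..<d} x * (v x - v y)\<^sup>2) \<partial>lborel) * indicator {c..<d} y
        = (\<integral>\<^sup>+x. ennreal (indicator {c..<d} x * (v x - v y)\<^sup>2) * indicator {c..<d} y \<partial>lborel)"
      by (rule nn_integral_multc[symmetric]) measurable
    ultimately show "(\<integral>\<^sup>+x. ennreal (indicator {c..<d} x * (v x - v y)\<^sup>2) \<partial>lborel) * indicator {c..<d} y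
        \<le> (\<integral>\<^sup>+x. ennreal (h\<^sup>2) * (indicator ({c..<d} \<times> {c..<d}) (y, x) * gagliardo_density v (y, x)) \<partial>lborel)"
      by (simp add: nn_integral_mono)
  qed
  also have "\<dots> = ennreal (h\<^sup>2) * (\<integral>\<^sup>+y. (\<integral>\<^sup>+x. indicator ({c..<d} \<times> {c..<d}) (y, x) * gagliardo_density v (y, x) \<partial>lborel) \<partial>lborel)"
  proof -
    have "(\<integral>\<^sup>+y. (\<integral>\<^sup>+x. ennreal (h\<^sup>2) * (indicator ({c..<d} \<times> {c..<d}) (y, x) * gagliardo_density v (y, x)) \<partial>lborel) \<partial>lborel)
      = (\<integral>\<^sup>+y. ennreal (h\<^sup>2) * (\<integral>\<^sup>+x. indicator ({c..<d} \<times> {c..<d}) (y, x) * gagliardo_density v (y, x) \<partial>lborel) \<partial>lborel)"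
      by (intro nn_integral_cong nn_integral_cmult) measurable
    also have "\<dots> = ennreal (h\<^sup>2) * (\<integral>\<^sup>+y. (\<integral>\<^sup>+x. indicator ({c..<d} \<times> {c..<d}) (y, x) * gagliardo_density v (y, x) \<partial>lborel) \<partial>lborel)"
      by (rule nn_integral_cmult) measurable
    finally show ?thesis .
  qed
  also have "(\<integral>\<^sup>+y. (\<integral>\<^sup>+x. indicator ({c..<d} \<times> {c..<d}) (y, x) * gagliardo_density v (y, x) \<partial>lborel) \<partial>lborel)
      = (\<integral>\<^sup>+z. indicator ({c..<d} \<times> {c..<d}) z * gagliardo_density v z \<partial>(lborel \<Otimes>\<^sub>M lborel))"
    by (rule lborel.nn_integral_fst[of "\<lambda>z. indicator ({c..<d} \<times> {c..<d}) z * gagliardo_density v z" lborel, simplified]) measurable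
  finally show ?thesis unfolding X_def h_def by simp
qed

definition cell :: "real \<Rightarrow> real \<Rightarrow> nat \<Rightarrow> real set" where
  "cell a h k = {a + real k * h ..< a + (real k + 1) * h}"

lemma cell_unique:
  assumes h: "0 < h" and x: "x \<in> cell a h k" "x \<in> cell a h k'"
  shows "k = k'"
proof -
  have "real k * h < (real k' + 1) * h" "real k' * h < (real k + 1) * h"
    using x unfolding cell_def by auto
  then have "real k < real k' + 1" "real k' < real k + 1"
    using h by (simp_all add: mult_less_cancel_right)
  then show ?thesis by linarith
qed

lemma sum_indicator_cell:
  assumes h: "0 < h"
  shows "(\<Sum>k<M. indicator (cell a h k) x) = (indicator {a..<a + real M * h} x :: real)"
proof (cases "x \<in> {a..<a + real M * h}")
  case True
  define k0 where "k0 = nat \<lfloor>(x - a) / h\<rfloor>"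
  have q0: "0 \<le> (x - a) / h" and q1: "(x - a) / h < real M" using True h by (auto simp: field_simps)
  have fl: "real k0 \<le> (x - a) / h" "(x - a) / h < real k0 + 1"
    unfolding k0_def using q0 by (auto simp: of_nat_nat)
  have k0M: "k0 < M" using fl q1 by linarith
  have xin: "x \<in> cell a h k0" unfolding cell_def using fl h by (auto simp: field_simps)
  have "(\<Sum>k<M. indicator (cell a h k) x) = indicator (cell a h k0) x + (\<Sum>k\<in>{..<M} - {k0}. indicator (cell a h k) x :: real)"
    using k0M by (subst sum.remove[of _ k0]) auto
  also have "(\<Sum>k\<in>{..<M} - {k0}. indicator (cell a h k) x :: real) = 0"
    using cell_unique[OF h xin] by (intro sum.neutral) (auto simp: indicator_def)
  finally show ?thesis using xin True by simp
next
  case False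
  have "x \<notin> cell a h k" if "k < M" for k
  proof
    assume "x \<in> cell a h k"
    then have "a + real k * h \<le> x" "x < a + (real k + 1) * h" unfolding cell_def by auto
    moreover have "a \<le> a + real k * h" using h by simp
    moreover have "(real k + 1) * h \<le> real M * h" using that h by (intro mult_right_mono) auto
    ultimately show False using False by auto
  qed
  then have "(\<Sum>k<M. indicator (cell a h k) x) = (0::real)" by (intro sum.neutral) (auto simp: indicator_def)
  then show ?thesis using False by simp
qed

lemma sum_indicator_cell_le_1:
  assumes h: "0 < h"
  shows "(\<Sum>k<M. indicator (cell a h k) x) \<le> (1::real)"
  using sum_indicator_cell[OF h] by (simp add: indicator_def)

lemma sum_cell_gagliardo_le:
  assumes h: "0 < h" and [measurable]: "v \<in> borel_measurable borel"
  shows "(\<Sum>k<M. \<integral>\<^sup>+z. indicator (cell a h k \<times> cell a h k) z * gagliardo_density v z \<partial>(lborel \<Otimes>\<^sub>M lborel)) \<le> gagliardo v"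
proof -
  have "(\<Sum>k<M. \<integral>\<^sup>+z. indicator (cell a h k \<times> cell a h k) z * gagliardo_density v z \<partial>(lborel \<Otimes>\<^sub>M lborel))
      = (\<integral>\<^sup>+z. (\<Sum>k<M. indicator (cell a h k \<times> cell a h k) z * gagliardo_density v z) \<partial>(lborel \<Otimes>\<^sub>M lborel))"
    by (rule nn_integral_sum[symmetric]) (simp add: cell_def)
  also have "\<dots> \<le> (\<integral>\<^sup>+z. gagliardo_density v z \<partial>(lborel \<Otimes>\<^sub>M lborel))"
  proof (intro nn_integral_mono)
    fix z :: "real \<times> real"
    have s1: "(\<Sum>k<M. indicator (cell a h k \<times> cell a h k) z) \<le> (\<Sum>k<M. indicator (cell a h k) (fst z) :: real)"
      by (intro sum_mono) (auto simp: indicator_def)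
    also have "\<dots> \<le> 1" by (rule sum_indicator_cell_le_1[OF h])
    finally have s2: "ennreal (\<Sum>k<M. indicator (cell a h k \<times> cell a h k) z) \<le> 1"
      by (simp add: ennreal_leI)
    have "(\<Sum>k<M. indicator (cell a h k \<times> cell a h k) z * gagliardo_density v z) = (\<Sum>k<M. ennreal (indicator (cell a h k \<times> cell a h k) z)) * gagliardo_density v z"
      by (simp add: sum_distrib_right ennreal_indicator)
    also have "(\<Sum>k<M. ennreal (indicator (cell a h k \<times> cell a h k) z)) = ennreal (\<Sum>k<M. indicator (cell a h k \<times> cell a h k) z)"
      by (rule sum_ennreal) auto
    also have "ennreal (\<Sum>k<M. indicator (cell a h k \<times> cell a h k) z) * gagliardo_density v z \<le> 1 * gagliardo_density v z"
      by (rule mult_right_mono[OF s2]) simp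
    finally show "(\<Sum>k<M. indicator (cell a h k \<times> cell a h k) z * gagliardo_density v z) \<le> gagliardo_density v z" by simp
  qed
  finally show ?thesis unfolding gagliardo_eq_nn_integral_density .
qed

definition cell_mean :: "real \<Rightarrow> real \<Rightarrow> (real \<Rightarrow> real) \<Rightarrow> nat \<Rightarrow> real" where
  "cell_mean a h v k = (\<integral>x. indicator (cell a h k) x * v x \<partial>lborel) / h"

definition cell_deviation :: "real \<Rightarrow> real \<Rightarrow> (real \<Rightarrow> real) \<Rightarrow> nat \<Rightarrow> real" where
  "cell_deviation a h v k = (\<integral>x. indicator (cell a h k) x * (v x - cell_mean a h v k)\<^sup>2 \<partial>lborel)"

lemma cell_deviation_nonneg: "0 \<le> cell_deviation a h v k"
  unfolding cell_deviation_def by (intro integral_nonneg_AE) auto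

lemma sum_cell_deviation_le:
  assumes v: "v \<in> H12" and h: "0 < h"
  shows "(\<Sum>k<M. cell_deviation a h v k) \<le> h * enn2real (gagliardo v)"
proof -
  have vb[measurable]: "v \<in> borel_measurable borel" using H12D[OF v] by simp
  define I where "I k = (\<integral>\<^sup>+z. indicator (cell a h k \<times> cell a h k) z * gagliardo_density v z \<partial>(lborel \<Otimes>\<^sub>M lborel))" for k
  have cb: "ennreal (h * cell_deviation a h v k) \<le> ennreal (h\<^sup>2) * I k" for k
  proof -
    have cd: "a + real k * h < a + (real k + 1) * h" using h by (simp add: algebra_simps)
    have dc: "a + (real k + 1) * h - (a + real k * h) = h" by (simp add: algebra_simps)
    show ?thesis using poincare_interval[OF v cd] unfolding dc cell_deviation_def cell_mean_def I_def cell_def .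
  qed
  have "ennreal (h * (\<Sum>k<M. cell_deviation a h v k)) = (\<Sum>k<M. ennreal (h * cell_deviation a h v k))"
    using h cell_deviation_nonneg by (simp add: sum_distrib_left)
  also have "\<dots> \<le> (\<Sum>k<M. ennreal (h\<^sup>2) * I k)" by (intro sum_mono cb)
  also have "\<dots> = ennreal (h\<^sup>2) * (\<Sum>k<M. I k)" by (simp add: sum_distrib_left)
  also have "\<dots> \<le> ennreal (h\<^sup>2) * gagliardo v"
    unfolding I_def by (intro mult_left_mono sum_cell_gagliardo_le h vb) auto
  also have "\<dots> = ennreal (h\<^sup>2 * enn2real (gagliardo v))"
    using H12D(3)[OF v] by (simp add: ennreal_mult'' ennreal_enn2real_if)
  finally have "h * (\<Sum>k<M. cell_deviation a h v k) \<le> h\<^sup>2 * enn2real (gagliardo v)"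
    using h by (subst (asm) ennreal_le_iff) (auto simp: enn2real_nonneg)
  then show ?thesis using h by (simp add: power2_eq_square mult.assoc)
qed

lemma integrable_power2_diff_H12:
  assumes "v \<in> H12" and "u \<in> H12"
  shows "integrable lborel (\<lambda>x. (v x - u x)\<^sup>2)"
proof (rule Bochner_Integration.integrable_bound)
  show "integrable lborel (\<lambda>x. 2 * (v x)\<^sup>2 + 2 * (u x)\<^sup>2)"
    using H12D(2)[OF assms(1)] H12D(2)[OF assms(2)] by simp
  show "(\<lambda>x. (v x - u x)\<^sup>2) \<in> borel_measurable lborel"
    using H12D(1)[OF assms(1)] H12D(1)[OF assms(2)] by measurable
  have "(v x - u x)\<^sup>2 \<le> 2 * (v x)\<^sup>2 + 2 * (u x)\<^sup>2" for x
    using zero_le_power2[of "v x + u x"] by (simp add: power2_eq_square algebra_simps)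
  then show "AE x in lborel. norm ((v x - u x)\<^sup>2) \<le> norm (2 * (v x)\<^sup>2 + 2 * (u x)\<^sup>2)"
    by simp
qed

lemma power2_diff_le_three: "((p::real) - q)\<^sup>2 \<le> 3 * (p - A)\<^sup>2 + 3 * (A - B)\<^sup>2 + 3 * (q - B)\<^sup>2"
proof -
  have "0 \<le> ((p - A) - (A - B))\<^sup>2 + ((p - A) + (q - B))\<^sup>2 + ((A - B) + (q - B))\<^sup>2" by simp
  then show ?thesis by (simp add: power2_eq_square algebra_simps)
qed

lemma cell_L2_dist_le:
  assumes v: "v \<in> H12" and u: "u \<in> H12" and "0 < h"
  shows "(\<integral>x. indicator (cell a h k) x * (v x - u x)\<^sup>2 \<partial>lborel)
    \<le> 3 * cell_deviation a h v k + 3 * h * (cell_mean a h v k - cell_mean a h u k)\<^sup>2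
      + 3 * cell_deviation a h u k"
proof -
  define A where "A = cell_mean a h v k"
  define B where "B = cell_mean a h u k"
  have [measurable]: "v \<in> borel_measurable lborel" "u \<in> borel_measurable lborel"
    using H12D v u by blast+
  have i0: "integrable lborel (\<lambda>x. indicator (cell a h k) x * (v x - u x)\<^sup>2)"
    using integrable_mult_indicator[OF _ integrable_power2_diff_H12[OF v u]] by (simp add: cell_def)
  have i1: "integrable lborel (\<lambda>x. indicator (cell a h k) x * (v x - A)\<^sup>2)"
    unfolding cell_def by (rule integrable_indicator_mult_power2_diff[OF v])
  have i2: "integrable lborel (\<lambda>x. indicator (cell a h k) x * (u x - B)\<^sup>2)"
    unfolding cell_def by (rule integrable_indicator_mult_power2_diff[OF u])
  have i3: "integrable lborel (\<lambda>x. indicator (cell a h k) x :: real)" by (auto simp: cell_def)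
  have "(\<integral>x. indicator (cell a h k) x * (v x - u x)\<^sup>2 \<partial>lborel)
      \<le> (\<integral>x. 3 * (indicator (cell a h k) x * (v x - A)\<^sup>2) + (3 * (A - B)\<^sup>2) * indicator (cell a h k) x
            + 3 * (indicator (cell a h k) x * (u x - B)\<^sup>2) \<partial>lborel)"
  proof (rule integral_mono[OF i0])
    show "integrable lborel (\<lambda>x. 3 * (indicator (cell a h k) x * (v x - A)\<^sup>2)
        + (3 * (A - B)\<^sup>2) * indicator (cell a h k) x + 3 * (indicator (cell a h k) x * (u x - B)\<^sup>2))"
      using i1 i2 i3 by auto
    show "indicator (cell a h k) x * (v x - u x)\<^sup>2 \<le> 3 * (indicator (cell a h k) x * (v x - A)\<^sup>2)
        + (3 * (A - B)\<^sup>2) * indicator (cell a h k) x + 3 * (indicator (cell a h k) x * (u x - B)\<^sup>2)" for x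
      using power2_diff_le_three[of "v x" "u x" A B] by (auto simp: indicator_def)
  qed
  also have "\<dots> = 3 * cell_deviation a h v k + 3 * h * (A - B)\<^sup>2 + 3 * cell_deviation a h u k"
    using i1 i2 i3 \<open>0 < h\<close> unfolding cell_deviation_def A_def B_def
    by (simp add: Bochner_Integration.integral_add cell_def algebra_simps)
  finally show ?thesis unfolding A_def B_def .
qed

lemma L2_interval_dist_le:
  assumes v: "v \<in> H12" and u: "u \<in> H12" and h: "0 < h"
  shows "(\<integral>x. indicator {a..<a + real M * h} x * (v x - u x)\<^sup>2 \<partial>lborel)
    \<le> 3 * h * (enn2real (gagliardo v) + enn2real (gagliardo u))
      + 3 * h * (\<Sum>k<M. (cell_mean a h v k - cell_mean a h u k)\<^sup>2)"
proof -
  have [measurable]: "v \<in> borel_measurable lborel" "u \<in> borel_measurable lborel"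
    using H12D v u by blast+
  have "(\<integral>x. indicator {a..<a + real M * h} x * (v x - u x)\<^sup>2 \<partial>lborel)
      = (\<integral>x. (\<Sum>k<M. indicator (cell a h k) x * (v x - u x)\<^sup>2) \<partial>lborel)"
    by (simp add: sum_indicator_cell[OF h, symmetric] sum_distrib_right)
  also have "\<dots> = (\<Sum>k<M. \<integral>x. indicator (cell a h k) x * (v x - u x)\<^sup>2 \<partial>lborel)"
    using integrable_mult_indicator[OF _ integrable_power2_diff_H12[OF v u]]
    by (intro Bochner_Integration.integral_sum) (simp add: cell_def)
  also have "\<dots> \<le> (\<Sum>k<M. 3 * cell_deviation a h v k
      + 3 * h * (cell_mean a h v k - cell_mean a h u k)\<^sup>2 + 3 * cell_deviation a h u k)"
    by (intro sum_mono cell_L2_dist_le v u h)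
  also have "\<dots> = 3 * (\<Sum>k<M. cell_deviation a h v k) + 3 * (\<Sum>k<M. cell_deviation a h u k)
      + 3 * h * (\<Sum>k<M. (cell_mean a h v k - cell_mean a h u k)\<^sup>2)"
    by (simp add: sum.distrib sum_distrib_left)
  also have "\<dots> \<le> 3 * (h * enn2real (gagliardo v)) + 3 * (h * enn2real (gagliardo u))
      + 3 * h * (\<Sum>k<M. (cell_mean a h v k - cell_mean a h u k)\<^sup>2)"
    using sum_cell_deviation_le[OF v h, of a M] sum_cell_deviation_le[OF u h, of a M] by simp
  finally show ?thesis by (simp add: algebra_simps)
qed

lemma gagliardo_le_power2: assumes v: "v \<in> H12" and b: "H12_norm v \<le> \<rho>"
  shows "enn2real (gagliardo v) \<le> \<rho>\<^sup>2"
proof -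
  have "0 \<le> H12_norm v" unfolding H12_norm_def by simp
  then have "(H12_norm v)\<^sup>2 \<le> \<rho>\<^sup>2" using b by (intro power_mono) auto
  moreover have "0 \<le> (\<integral>x. (v x)\<^sup>2 \<partial>lborel)" by simp
  ultimately show ?thesis using power2_H12_norm[OF v] by linarith
qed

lemma H12_weak_conv_L2_interval:
  assumes wc: "H12_weak_conv un u" and bnd: "\<And>n. H12_norm (un n) \<le> \<rho>" and R: "0 < R"
  shows "(\<lambda>n. \<integral>x. indicator {-R..<R} x * (un n x - u x)\<^sup>2 \<partial>lborel) \<longlonglongrightarrow> 0"
proof (rule LIMSEQ_I)
  fix e :: real assume e: "0 < e"
  have un: "un n \<in> H12" for n using wc unfolding H12_weak_conv_def by auto
  have u: "u \<in> H12" and L: "\<And>L. L \<in> H12_dual \<Longrightarrow> (\<lambda>n. L (un n)) \<longlonglongrightarrow> L u"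
    using wc unfolding H12_weak_conv_def by auto
  define G where "G = \<rho>\<^sup>2 + enn2real (gagliardo u)"
  have G0: "0 \<le> G" unfolding G_def by (simp add: enn2real_nonneg)
  obtain n0 where n0: "12 * R * G / e < real n0" using reals_Archimedean2 by blast
  define M where "M = Suc n0"
  define h where "h = 2 * R / real M"
  have h0: "0 < h" unfolding h_def M_def using R by simp
  have aM: "- R + real M * h = R" unfolding h_def M_def by simp
  have hG: "3 * h * G < e / 2"
  proof -
    have "12 * R * G / e < real M" using n0 unfolding M_def by simp
    then have "12 * R * G < real M * e" using e by (simp add: divide_less_eq)
    then show ?thesis unfolding h_def M_def using e by (simp add: field_simps)
  qed
  have cm: "(\<lambda>n. cell_mean (-R) h (un n) k) \<longlonglongrightarrow> cell_mean (-R) h u k" for k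
  proof -
    have "(\<lambda>v. \<integral>x. indicator (cell (-R) h k) x * v x \<partial>lborel) \<in> H12_dual"
      unfolding cell_def using h0 by (intro interval_integral_in_H12_dual) (simp add: algebra_simps)
    from L[OF this] show ?thesis unfolding cell_mean_def using h0 by (intro tendsto_divide) auto
  qed
  have "(\<lambda>n. \<Sum>k<M. (cell_mean (-R) h (un n) k - cell_mean (-R) h u k)\<^sup>2) \<longlonglongrightarrow> (\<Sum>k<M. (cell_mean (-R) h u k - cell_mean (-R) h u k)\<^sup>2)"
    by (intro tendsto_intros cm)
  then have "(\<lambda>n. \<Sum>k<M. (cell_mean (-R) h (un n) k - cell_mean (-R) h u k)\<^sup>2) \<longlonglongrightarrow> 0" by simp
  then have "eventually (\<lambda>n. (\<Sum>k<M. (cell_mean (-R) h (un n) k - cell_mean (-R) h u k)\<^sup>2) < e / (6 * h)) sequentially"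
    using e h0 by (intro order_tendstoD(2)) auto
  then obtain N where N: "\<And>n. n \<ge> N \<Longrightarrow> (\<Sum>k<M. (cell_mean (-R) h (un n) k - cell_mean (-R) h u k)\<^sup>2) < e / (6 * h)"
    unfolding eventually_sequentially by blast
  have "norm ((\<integral>x. indicator {-R..<R} x * (un n x - u x)\<^sup>2 \<partial>lborel) - 0) < e" if n: "n \<ge> N" for n
  proof -
    have I0: "0 \<le> (\<integral>x. indicator {-R..<R} x * (un n x - u x)\<^sup>2 \<partial>lborel)"
      by (intro integral_nonneg_AE) auto
    have "(\<integral>x. indicator {-R..<R} x * (un n x - u x)\<^sup>2 \<partial>lborel)
       \<le> 3 * h * (enn2real (gagliardo (un n)) + enn2real (gagliardo u)) + 3 * h * (\<Sum>k<M. (cell_mean (-R) h (un n) k - cell_mean (-R) h u k)\<^sup>2)"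
      using L2_interval_dist_le[OF un u h0, of "-R" M] unfolding aM .
    also have "\<dots> \<le> 3 * h * G + 3 * h * (e / (6 * h))"
      using gagliardo_le_power2[OF un bnd] N[OF n] h0 unfolding G_def
      by (intro add_mono mult_left_mono) auto
    also have "\<dots> < e" using hG h0 by simp
    finally show ?thesis using I0 by simp
  qed
  then show "\<exists>no. \<forall>n\<ge>no. norm ((\<integral>x. indicator {-R..<R} x * (un n x - u x)\<^sup>2 \<partial>lborel) - 0) < e" by blast
qed

lemma std_normal_density_le_1: "std_normal_density x \<le> 1"
proof -
  have "exp (- x\<^sup>2 / 2) \<le> 1" by simp
  moreover have "1 / sqrt (2 * pi) \<le> 1" using pi_gt3 by (simp add: divide_le_eq)
  ultimately show ?thesis unfolding std_normal_density_def
    by (metis mult_le_one exp_ge_zero div_0 divide_nonneg_pos real_sqrt_ge_zero zero_le_one dual_order.trans le_less)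
qed

lemma std_normal_tail_tendsto_zero: "(\<lambda>k::nat. \<integral>x. std_normal_density x * indicator (- {- real k..<real k}) x \<partial>lborel) \<longlonglongrightarrow> 0"
proof -
  have zm: "(\<lambda>x::real. 0::real) \<in> borel_measurable lborel" by simp
  have sm: "(\<lambda>x. std_normal_density x * indicator (- {- real k..<real k}) x) \<in> borel_measurable lborel" for k
    by measurable
  have ae: "AE x in lborel. (\<lambda>k. std_normal_density x * indicator (- {- real k..<real k}) x) \<longlonglongrightarrow> 0"
  proof (intro AE_I2)
    fix x :: real
    obtain N where N: "\<bar>x\<bar> < real N" using reals_Archimedean2 by blast
    have "eventually (\<lambda>k. std_normal_density x * indicator (- {- real k..<real k}) x = 0) sequentially"
      unfolding eventually_sequentially
    proof (intro exI allI impI)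
      fix k assume "N \<le> k"
      then have "real N \<le> real k" by simp
      then have "x \<in> {- real k..<real k}" using N by auto
      then show "std_normal_density x * indicator (- {- real k..<real k}) x = 0" by simp
    qed
    then show "(\<lambda>k. std_normal_density x * indicator (- {- real k..<real k}) x) \<longlonglongrightarrow> 0"
      by (rule tendsto_eventually)
  qed
  have bd: "AE x in lborel. norm (std_normal_density x * indicator (- {- real k..<real k}) x) \<le> std_normal_density x" for k
    by (intro AE_I2) (auto simp: indicator_def)
  show ?thesis
    using integral_dominated_convergence[OF zm sm integrable_normal_density ae bd] by simp
qed

lemma integrable_std_normal_density_mult_min:
  assumes [measurable]: "g \<in> borel_measurable lborel"
  shows "integrable lborel (\<lambda>x. std_normal_density x * min 1 ((g x)\<^sup>2))"
proof (rule Bochner_Integration.integrable_bound[OF integrable_normal_density[where \<mu>=0 and \<sigma>=1]])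
  show "AE x in lborel. norm (std_normal_density x * min 1 ((g x)\<^sup>2)) \<le> norm (std_normal_density x)"
  proof (intro AE_I2)
    fix x
    have "std_normal_density x * min 1 ((g x)\<^sup>2) \<le> std_normal_density x * 1" by (intro mult_left_mono) auto
    then show "norm (std_normal_density x * min 1 ((g x)\<^sup>2)) \<le> norm (std_normal_density x)" by simp
  qed
qed measurable

lemma std_normal_density_mult_min_le:
  assumes "0 \<le> t"
  shows "std_normal_density x * min 1 t \<le> indicator A x * t + std_normal_density x * indicator (- A) x"
proof (cases "x \<in> A")
  case True
  have "std_normal_density x * min 1 t \<le> 1 * t"
    using assms by (intro mult_mono std_normal_density_le_1) auto
  then show ?thesis using True by simp
next
  case False
  have "std_normal_density x * min 1 t \<le> std_normal_density x * 1" by (intro mult_left_mono) auto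
  then show ?thesis using False assms by simp
qed

text \<open>Weighting by the Gaussian turns the \<open>L\<^sup>2\<^sub>l\<^sub>o\<^sub>c\<close> convergence into convergence in \<open>L\<^sup>1\<close>, and
  \<open>L\<^sup>1\<close> convergence has an almost everywhere convergent subsequence.\<close>

lemma H12_weak_conv_gaussian_L1:
  assumes wc: "H12_weak_conv un u" and bnd: "\<And>n. H12_norm (un n) \<le> \<rho>"
  shows "(\<lambda>n. \<integral>x. std_normal_density x * min 1 ((un n x - u x)\<^sup>2) \<partial>lborel) \<longlonglongrightarrow> 0"
proof (rule LIMSEQ_I)
  fix e :: real assume "0 < e"
  have un: "un n \<in> H12" and u: "u \<in> H12" for n using wc unfolding H12_weak_conv_def by auto
  have [measurable]: "un n \<in> borel_measurable lborel" "u \<in> borel_measurable lborel" for n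
    using H12D(1) un u by blast+
  obtain K :: nat where "K > 0"
    and tail: "(\<integral>x. std_normal_density x * indicator (- {- real K..<real K}) x \<partial>lborel) < e / 2"
  proof -
    have "eventually (\<lambda>k. (\<integral>x. std_normal_density x * indicator (- {- real k..<real k}) x \<partial>lborel) < e / 2)
        sequentially"
      using \<open>0 < e\<close> by (intro order_tendstoD(2)[OF std_normal_tail_tendsto_zero]) auto
    then obtain K0 where K0: "\<And>k. k \<ge> K0 \<Longrightarrow>
        (\<integral>x. std_normal_density x * indicator (- {- real k..<real k}) x \<partial>lborel) < e / 2"
      unfolding eventually_sequentially by blast
    show ?thesis using K0[of "Suc K0"] by (intro that[of "Suc K0"]) auto
  qed
  have "(\<lambda>n. \<integral>x. indicator {- real K..<real K} x * (un n x - u x)\<^sup>2 \<partial>lborel) \<longlonglongrightarrow> 0"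
    using H12_weak_conv_L2_interval[OF wc bnd, of "real K"] \<open>K > 0\<close> by simp
  then have "eventually (\<lambda>n. (\<integral>x. indicator {- real K..<real K} x * (un n x - u x)\<^sup>2 \<partial>lborel) < e / 2)
      sequentially"
    using \<open>0 < e\<close> by (intro order_tendstoD(2)) auto
  then obtain N where N: "\<And>n. n \<ge> N \<Longrightarrow>
      (\<integral>x. indicator {- real K..<real K} x * (un n x - u x)\<^sup>2 \<partial>lborel) < e / 2"
    unfolding eventually_sequentially by blast
  have "norm ((\<integral>x. std_normal_density x * min 1 ((un n x - u x)\<^sup>2) \<partial>lborel) - 0) < e"
    if "n \<ge> N" for n
  proof -
    have local: "integrable lborel (\<lambda>x. indicator {- real K..<real K} x * (un n x - u x)\<^sup>2)"
      using integrable_mult_indicator[OF _ integrable_power2_diff_H12[OF un u]] by simp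
    have gaussian_tail: "integrable lborel (\<lambda>x. std_normal_density x * indicator (- {- real K..<real K}) x)"
      by (rule integrable_real_mult_indicator) (auto intro: integrable_normal_density)
    have "(\<integral>x. std_normal_density x * min 1 ((un n x - u x)\<^sup>2) \<partial>lborel)
        \<le> (\<integral>x. indicator {- real K..<real K} x * (un n x - u x)\<^sup>2
            + std_normal_density x * indicator (- {- real K..<real K}) x \<partial>lborel)"
    proof (rule integral_mono)
      show "integrable lborel (\<lambda>x. std_normal_density x * min 1 ((un n x - u x)\<^sup>2))"
        by (rule integrable_std_normal_density_mult_min) measurable
      show "integrable lborel (\<lambda>x. indicator {- real K..<real K} x * (un n x - u x)\<^sup>2
          + std_normal_density x * indicator (- {- real K..<real K}) x)"
        using local gaussian_tail by (rule Bochner_Integration.integrable_add)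
    qed (rule std_normal_density_mult_min_le, simp)
    also have "\<dots> < e / 2 + e / 2" using N[OF that] tail local gaussian_tail by simp
    finally show ?thesis by simp
  qed
  then show "\<exists>N. \<forall>n\<ge>N. norm ((\<integral>x. std_normal_density x * min 1 ((un n x - u x)\<^sup>2) \<partial>lborel) - 0) < e"
    by blast
qed

lemma H12_weak_conv_AE_subseq:
  assumes wc: "H12_weak_conv un u" and bnd: "\<And>n. H12_norm (un n) \<le> \<rho>"
  shows "\<exists>r. strict_mono r \<and> (AE x in lborel. (\<lambda>n. un (r n) x) \<longlonglongrightarrow> u x)"
proof -
  have un: "un n \<in> H12" for n using wc unfolding H12_weak_conv_def by auto
  have u: "u \<in> H12" using wc unfolding H12_weak_conv_def by auto
  have [measurable]: "un n \<in> borel_measurable lborel" "u \<in> borel_measurable lborel" for n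
    using H12D(1) un u by blast+
  define D where "D n x = std_normal_density x * min 1 ((un n x - u x)\<^sup>2)" for n x
  have integrable: "integrable lborel (D n)" for n
    unfolding D_def by (rule integrable_std_normal_density_mult_min) measurable
  have L1: "(\<lambda>n. \<integral>x. norm (D n x) \<partial>lborel) \<longlonglongrightarrow> 0"
    using H12_weak_conv_gaussian_L1[OF wc bnd] unfolding D_def by simp
  obtain r where r: "strict_mono r" "AE x in lborel. (\<lambda>n. D (r n) x) \<longlonglongrightarrow> 0"
    using tendsto_L1_AE_subseq[OF integrable L1] by blast
  have "AE x in lborel. (\<lambda>n. un (r n) x) \<longlonglongrightarrow> u x" using r(2)
  proof eventually_elim
    case (elim x)
    have p: "std_normal_density x > 0" by (rule normal_density_pos) simp
    have "(\<lambda>n. D (r n) x / std_normal_density x) \<longlonglongrightarrow> 0 / std_normal_density x"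
      by (intro tendsto_divide elim) (use p in auto)
    then have m: "(\<lambda>n. min 1 ((un (r n) x - u x)\<^sup>2)) \<longlonglongrightarrow> 0" using p unfolding D_def by simp
    then have "eventually (\<lambda>n. min 1 ((un (r n) x - u x)\<^sup>2) < 1) sequentially"
      by (intro order_tendstoD(2)) auto
    then have "eventually (\<lambda>n. min 1 ((un (r n) x - u x)\<^sup>2) = (un (r n) x - u x)\<^sup>2) sequentially"
      by eventually_elim (auto simp: min_def)
    then have "(\<lambda>n. (un (r n) x - u x)\<^sup>2) \<longlonglongrightarrow> 0" using m by (rule Lim_transform_eventually[rotated]) 
    then have "(\<lambda>n. sqrt ((un (r n) x - u x)\<^sup>2)) \<longlonglongrightarrow> sqrt 0" by (intro tendsto_intros)
    then have "(\<lambda>n. \<bar>un (r n) x - u x\<bar>) \<longlonglongrightarrow> 0" by simp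
    then have "(\<lambda>n. un (r n) x - u x) \<longlonglongrightarrow> 0" by (simp add: tendsto_rabs_zero_iff)
    then show ?case by (simp add: LIM_zero_iff)
  qed
  then show ?thesis using r(1) by blast
qed


section \<open>Small norms and Ozawa's inequality\<close>

lemma gagliardo_scale:
  assumes [measurable]: "w \<in> borel_measurable borel" and r: "0 < \<rho>"
  shows "gagliardo (\<lambda>x. w x / \<rho>) = ennreal (1 / \<rho>\<^sup>2) * gagliardo w"
proof -
  have "gagliardo (\<lambda>x. w x / \<rho>) = (\<integral>\<^sup>+z. ennreal (1 / \<rho>\<^sup>2) * gagliardo_density w z \<partial>(lborel \<Otimes>\<^sub>M lborel))"
    unfolding gagliardo_eq_nn_integral_density
  proof (intro nn_integral_cong)
    fix z :: "real \<times> real"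
    have "((w (fst z) / \<rho> - w (snd z) / \<rho>)\<^sup>2 / (fst z - snd z)\<^sup>2) = (1 / \<rho>\<^sup>2) * ((w (fst z) - w (snd z))\<^sup>2 / (fst z - snd z)\<^sup>2)"
      using r by (simp add: field_simps power2_eq_square)
    moreover have "ennreal ((1 / \<rho>\<^sup>2) * ((w (fst z) - w (snd z))\<^sup>2 / (fst z - snd z)\<^sup>2))
        = ennreal (1 / \<rho>\<^sup>2) * ennreal ((w (fst z) - w (snd z))\<^sup>2 / (fst z - snd z)\<^sup>2)"
      by (rule ennreal_mult) auto
    ultimately show "gagliardo_density (\<lambda>x. w x / \<rho>) z = ennreal (1 / \<rho>\<^sup>2) * gagliardo_density w z"
      unfolding gagliardo_density_def by simp
  qed
  also have "\<dots> = ennreal (1 / \<rho>\<^sup>2) * gagliardo w"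
    unfolding gagliardo_eq_nn_integral_density by (rule nn_integral_cmult) measurable
  finally show ?thesis .
qed

lemma H12_divide:
  assumes "w \<in> H12" and "0 < \<rho>"
  shows "(\<lambda>x. w x / \<rho>) \<in> H12" and "H12_norm (\<lambda>x. w x / \<rho>) = H12_norm w / \<rho>"
proof -
  have [measurable]: "w \<in> borel_measurable borel" using H12D[OF assms(1)] by simp
  have gagliardo: "gagliardo (\<lambda>x. w x / \<rho>) = ennreal (1 / \<rho>\<^sup>2) * gagliardo w"
    by (rule gagliardo_scale) (use assms(2) in auto)
  have "integrable lborel (\<lambda>x. (w x / \<rho>)\<^sup>2)"
    using H12D(2)[OF assms(1)] by (simp add: power_divide)
  then show "(\<lambda>x. w x / \<rho>) \<in> H12"
    unfolding H12_def using gagliardo H12D(3)[OF assms(1)] by (auto simp: ennreal_mult_less_top)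
  have "(\<integral>x. (w x / \<rho>)\<^sup>2 \<partial>lborel) + enn2real (gagliardo (\<lambda>x. w x / \<rho>))
      = ((\<integral>x. (w x)\<^sup>2 \<partial>lborel) + enn2real (gagliardo w)) / \<rho>\<^sup>2"
    unfolding gagliardo by (simp add: power_divide enn2real_mult add_divide_distrib)
  then show "H12_norm (\<lambda>x. w x / \<rho>) = H12_norm w / \<rho>"
    unfolding H12_norm_def using assms(2) by (simp add: real_sqrt_divide)
qed

text \<open>Ozawa's inequality applied to \<open>w / \<rho>\<close>, with \<open>k \<rho>\<^sup>2 = \<alpha>\<close>, bounds \<open>\<integral> \<Phi>\<^sub>k(w)\<close> uniformly on the ball
  of radius \<open>\<rho>\<close>.\<close>

lemma ozawa_expsq_bound:
  assumes "ozawa_const \<omega>" and "0 < k"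
  shows "\<exists>\<rho>>0. \<exists>B\<ge>0. \<forall>w\<in>H12. H12_norm w < \<rho> \<longrightarrow>
    (\<integral>\<^sup>+x. ennreal (expsq k (w x)) \<partial>lborel) \<le> ennreal B"
proof -
  define \<alpha> where "\<alpha> = \<omega> / 2"
  have "0 < \<alpha>" "\<alpha> < \<omega>" using assms(1) by (auto simp: ozawa_const_def \<alpha>_def)
  then obtain H where "H > 0" and ozawa: "\<And>u. u \<in> H12 \<Longrightarrow> enn2real (gagliardo u) / (2 * pi) \<le> 1 \<Longrightarrow>
      (\<integral>\<^sup>+x. ennreal (exp (\<alpha> * (u x)^2) - 1) \<partial>lborel) \<le> ennreal (H * (\<integral>x. (u x)^2 \<partial>lborel))"
    using assms(1) unfolding ozawa_const_def by blast
  define \<rho> where "\<rho> = sqrt (\<alpha> / k)"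
  have "0 < \<rho>" and k\<rho>: "k * \<rho>\<^sup>2 = \<alpha>" using \<open>0 < \<alpha>\<close> \<open>0 < k\<close> by (auto simp: \<rho>_def)
  have "(\<integral>\<^sup>+x. ennreal (expsq k (w x)) \<partial>lborel) \<le> ennreal H" if "w \<in> H12" "H12_norm w < \<rho>" for w
  proof -
    define v where "v x = w x / \<rho>" for x
    have "v \<in> H12" unfolding v_def by (rule H12_divide(1)[OF \<open>w \<in> H12\<close> \<open>0 < \<rho>\<close>])
    have "H12_norm v < 1"
      unfolding v_def H12_divide(2)[OF \<open>w \<in> H12\<close> \<open>0 < \<rho>\<close>] using \<open>H12_norm w < \<rho>\<close> \<open>0 < \<rho>\<close> by simp
    moreover have "0 \<le> H12_norm v" unfolding H12_norm_def by simp
    ultimately have "(H12_norm v)\<^sup>2 < 1\<^sup>2" by (intro power_strict_mono) auto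
    then have norm_v: "(\<integral>x. (v x)\<^sup>2 \<partial>lborel) + enn2real (gagliardo v) < 1"
      using power2_H12_norm[OF \<open>v \<in> H12\<close>] by simp
    have "0 \<le> (\<integral>x. (v x)\<^sup>2 \<partial>lborel)" "0 \<le> enn2real (gagliardo v)" by simp_all
    then have "enn2real (gagliardo v) \<le> 2 * pi" and "(\<integral>x. (v x)\<^sup>2 \<partial>lborel) \<le> 1"
      using norm_v pi_gt3 by linarith+
    then have "enn2real (gagliardo v) / (2 * pi) \<le> 1" by simp
    have "(\<integral>\<^sup>+x. ennreal (expsq k (w x)) \<partial>lborel) = (\<integral>\<^sup>+x. ennreal (exp (\<alpha> * (v x)^2) - 1) \<partial>lborel)"
      unfolding expsq_def v_def k\<rho>[symmetric] using \<open>0 < \<rho>\<close> by (simp add: field_simps)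
    also have "\<dots> \<le> ennreal (H * (\<integral>x. (v x)^2 \<partial>lborel))"
      by (rule ozawa) fact+
    also have "\<dots> \<le> ennreal H"
      using \<open>H > 0\<close> \<open>(\<integral>x. (v x)\<^sup>2 \<partial>lborel) \<le> 1\<close> by (intro ennreal_leI) (simp add: mult_left_le)
    finally show ?thesis .
  qed
  then show ?thesis using \<open>0 < \<rho>\<close> \<open>H > 0\<close> by (intro exI[of _ \<rho>] conjI exI[of _ H]) auto
qed

section \<open>Splitting along weakly convergent sequences\<close>

lemma LIMSEQ_if_subseq_subseq_LIMSEQ:
  fixes X :: "nat \<Rightarrow> 'a::metric_space"
  assumes "\<And>r :: nat \<Rightarrow> nat. strict_mono r \<Longrightarrow>
    \<exists>r' :: nat \<Rightarrow> nat. strict_mono r' \<and> (\<lambda>n. X (r (r' n))) \<longlonglongrightarrow> L"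
  shows "X \<longlonglongrightarrow> L"
proof (rule ccontr)
  assume "\<not> X \<longlonglongrightarrow> L"
  then obtain e where "0 < e" and not_eventually: "\<not> eventually (\<lambda>n. dist (X n) L < e) sequentially"
    unfolding tendsto_iff by auto
  obtain r :: "nat \<Rightarrow> nat" where r: "strict_mono r" "\<forall>n. \<not> dist (X (r n)) L < e"
    using not_eventually_sequentiallyD[OF not_eventually] by auto
  obtain r' where "(\<lambda>n. X (r (r' n))) \<longlonglongrightarrow> L" using assms[OF r(1)] by auto
  then have "eventually (\<lambda>n. dist (X (r (r' n))) L < e) sequentially"
    using \<open>0 < e\<close> unfolding tendsto_iff by auto
  then obtain n where "dist (X (r (r' n))) L < e" by (auto simp: eventually_sequentially)
  then show False using r(2) by blast
qed

lemma H12_weak_conv_subseq: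
  assumes "H12_weak_conv un u" and "strict_mono r"
  shows "H12_weak_conv (\<lambda>n. un (r n)) u"
  using assms unfolding H12_weak_conv_def
  by (auto intro: LIMSEQ_subseq_LIMSEQ[unfolded comp_def])

lemma brezis_lieb_H12:
  assumes wc: "H12_weak_conv un u" and norm_le: "\<And>n. H12_norm (un n) \<le> \<rho>"
    and bound: "\<And>n. (\<integral>\<^sup>+x. ennreal (expsq (4 * \<kappa>) (un n x)) \<partial>lborel) \<le> ennreal B" and "0 \<le> B"
    and j: "continuous_on UNIV j" "j 0 = 0" "expsq_increment_bound \<kappa> j" and "0 < \<kappa>"
  shows "(\<lambda>n. (\<integral>x. j (un n x) \<partial>lborel) - (\<integral>x. j (un n x - u x) \<partial>lborel) - (\<integral>x. j (u x) \<partial>lborel))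
    \<longlonglongrightarrow> 0"
proof (rule LIMSEQ_if_subseq_subseq_LIMSEQ)
  fix r :: "nat \<Rightarrow> nat" assume "strict_mono r"
  have "H12_weak_conv (\<lambda>n. un (r n)) u" by (rule H12_weak_conv_subseq[OF wc \<open>strict_mono r\<close>])
  then obtain r' where "strict_mono r'" and lim: "AE x in lborel. (\<lambda>n. un (r (r' n)) x) \<longlonglongrightarrow> u x"
    using H12_weak_conv_AE_subseq[of "\<lambda>n. un (r n)" u \<rho>] norm_le by blast
  have "un n \<in> H12" "u \<in> H12" for n using wc unfolding H12_weak_conv_def by auto
  then have "un (r (r' n)) \<in> borel_measurable lborel" "u \<in> borel_measurable lborel" for n
    using H12D by blast+
  from brezis_lieb_expsq[OF j \<open>0 < \<kappa>\<close> this bound \<open>0 \<le> B\<close> lim]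
  show "\<exists>r'. strict_mono r' \<and> (\<lambda>n. (\<integral>x. j (un (r (r' n)) x) \<partial>lborel)
      - (\<integral>x. j (un (r (r' n)) x - u x) \<partial>lborel) - (\<integral>x. j (u x) \<partial>lborel)) \<longlonglongrightarrow> 0"
    using \<open>strict_mono r'\<close> by blast
qed

theorem lemma2p6:
  fixes f :: "real \<Rightarrow> real" and \<omega> \<alpha>0 :: real
  assumes omega: "ozawa_const \<omega>"
    and alpha0: "0 < \<alpha>0" "\<alpha>0 < \<omega>"
    and growth_f: "critical_growth \<alpha>0 f"
    and growth_df: "critical_growth \<alpha>0 (\<lambda>s. deriv f s * s)"
    and f1_C1: "\<forall>s. f differentiable (at s)" "continuous_on UNIV (deriv f)"
    and f1_odd: "\<forall>s. f (- s) = - f s"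
    and f1_convex: "convex_on {0..} f"
    and f1_lim: "((\<lambda>s. f s / s) \<longlongrightarrow> 0) (at 0)"
    and f2: "strict_mono_on {0<..} (\<lambda>s. f s / s)"
    and f3: "\<exists>q C. q > 2 \<and> C > 0 \<and> (\<forall>s. prim f s \<ge> C * \<bar>s\<bar> powr q)"
    and AR: "\<exists>\<theta>>2. \<forall>s. \<theta> * prim f s \<le> s * f s"
  shows "\<exists>\<rho>0>0. \<forall>un u. H12_weak_conv un u \<and> (\<forall>n. H12_norm (un n) < \<rho>0) \<longrightarrow>
     ((\<lambda>n. (\<integral>x. f (un n x) * un n x \<partial>lborel)
            - (\<integral>x. f (un n x - u x) * (un n x - u x) \<partial>lborel)
            - (\<integral>x. f (u x) * u x \<partial>lborel)) \<longlonglongrightarrow> 0) \<and>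
     ((\<lambda>n. (\<integral>x. prim f (un n x) \<partial>lborel)
            - (\<integral>x. prim f (un n x - u x) \<partial>lborel)
            - (\<integral>x. prim f (u x) \<partial>lborel)) \<longlonglongrightarrow> 0)"
proof -
  interpret critical_nonlinearity f \<alpha>0
    using alpha0 growth_f growth_df f1_C1 f1_odd f1_convex f1_lim f2 by unfold_locales auto
  define \<kappa> where "\<kappa> = 8 * (\<alpha>0 + 1)"
  have "0 < \<kappa>" using alpha0 by (simp add: \<kappa>_def)
  obtain \<rho>0 B where "0 < \<rho>0" "0 \<le> B" and small: "\<And>w. w \<in> H12 \<Longrightarrow> H12_norm w < \<rho>0 \<Longrightarrow>
      (\<integral>\<^sup>+x. ennreal (expsq (4 * \<kappa>) (w x)) \<partial>lborel) \<le> ennreal B"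
    using ozawa_expsq_bound[OF omega, of "4 * \<kappa>"] \<open>0 < \<kappa>\<close> by auto
  have increments: "expsq_increment_bound \<kappa> (\<lambda>s. f s * s)" "expsq_increment_bound \<kappa> (prim f)"
    unfolding \<kappa>_def using increment_bound_mult_id[of "\<alpha>0 + 1"] increment_bound_prim[of "\<alpha>0 + 1"] by simp_all
  have continuous: "continuous_on UNIV (\<lambda>s. f s * s)" "continuous_on UNIV (prim f)"
    using continuous_on_f continuous_on_prim by (auto intro!: continuous_intros)
  show ?thesis
  proof (intro exI[of _ \<rho>0] conjI allI impI \<open>0 < \<rho>0\<close>)
    fix un u assume "H12_weak_conv un u \<and> (\<forall>n. H12_norm (un n) < \<rho>0)"
    then have wc: "H12_weak_conv un u" and norm_le: "\<And>n. H12_norm (un n) \<le> \<rho>0"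
      and bound: "\<And>n. (\<integral>\<^sup>+x. ennreal (expsq (4 * \<kappa>) (un n x)) \<partial>lborel) \<le> ennreal B"
      using small unfolding H12_weak_conv_def by (auto intro: less_imp_le)
    note splitting = brezis_lieb_H12[OF wc norm_le bound \<open>0 \<le> B\<close> _ _ _ \<open>0 < \<kappa>\<close>]
    show "(\<lambda>n. (\<integral>x. f (un n x) * un n x \<partial>lborel) - (\<integral>x. f (un n x - u x) * (un n x - u x) \<partial>lborel)
        - (\<integral>x. f (u x) * u x \<partial>lborel)) \<longlonglongrightarrow> 0"
      using splitting[OF continuous(1) _ increments(1)] by simp
    show "(\<lambda>n. (\<integral>x. prim f (un n x) \<partial>lborel) - (\<integral>x. prim f (un n x - u x) \<partial>lborel)
        - (\<integral>x. prim f (u x) \<partial>lborel)) \<longlonglongrightarrow> 0"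
      using splitting[OF continuous(2) _ increments(2)] by (simp add: prim_def)
  qed
qed

end
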